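(* Let $\mathbb{K}$ be an algebraically closed field of characteristic zero, $\mathcal{C}\subset\mathbb{K}^2$ an affine irreducible plane curve, $A=(a,b)\in\mathbb{K}^2$, and assume that $\mathcal{C}_0\neq\emptyset$, that $\mathcal{C}$ is not a circle centered at $A$, and that $\mathcal{C}$ is not a line passing through $A$. Then for all but finitely many $d\in\mathbb{K}\setminus\{0\}$, all irreducible components of $\mathfrak{C}(\mathcal{C},A,d)$ are simple.
   Context: For $\mathcal{C}$ defined by an irreducible polynomial $f(y_1,y_2)$ and $d\in\mathbb{K}\setminus\{0\}$: $\mathfrak{B}(\mathcal{C},A,d)\subset\mathbb{K}^2\times\mathbb{K}^2\times\mathbb{K}$ is the set of $(\bar x,\bar y,w)$ with $f(y_1,y_2)=0$, $(x_1-y_1)^2+(x_2-y_2)^2=d^2$, $(y_2-b)(x_1-y_1)-(y_1-a)(x_2-y_2)=0$, $w((y_1-a)^2+(y_2-b)^2)=1$; $\pi_1,\pi_2$ are the projections $(\bar x,\bar y,w)\mapsto\bar x$, $\mapsto\bar y$; the conchoid $\mathfrak{C}(\mathcal{C},A,d)$ is the Zariski closure of $\pi_1(\mathfrak{B}(\mathcal{C},A,d))$. $\mathcal{C}_0=\{(p_1,p_2)\in\mathcal{C}:(p_1-a)^2+(p_2-b)^2\neq0\}$. An irreducible component $\mathcal{M}$ of $\mathfrak{C}(\mathcal{C},A,d)$ is simple if there is a non-empty Zariski dense $\Omega\subset\mathcal{M}$ with $\mathrm{Card}(\pi_2(\pi_1^{-1}(Q)))=1$ for all $Q\in\Omega$;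 otherwise special. A circle centered at $A$ of radius $r$ is $(y_1-a)^2+(y_2-b)^2=r^2$. *)

theory Defs
  imports "HOL-Computational_Algebra.Computational_Algebra"
begin

text \<open>Bivariate polynomials over K are represented as elements of K[y1][y2],
  i.e. of type 'a poly poly: the outer variable is y2, the coefficients are
  polynomials in y1.\<close>

definition eval2 :: "'a::comm_semiring_1 poly poly \<Rightarrow> 'a \<Rightarrow> 'a \<Rightarrow> 'a" where
  "eval2 f y1 y2 = poly (map_poly (\<lambda>c. poly c y1) f) y2"

definition curve :: "'a::comm_semiring_1 poly poly \<Rightarrow> ('a \<times> 'a) set" where
  "curve f = {(y1, y2). eval2 f y1 y2 = 0}"

definition zariski_closed :: "('a::comm_semiring_1 \<times> 'a) set \<Rightarrow> bool" where
  "zariski_closed S \<longleftrightarrow> (\<exists>P :: 'a poly poly set. S = {(x1, x2). \<forall>g\<in>P. eval2 g x1 x2 = 0})"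

definition zariski_closure :: "('a::comm_semiring_1 \<times> 'a) set \<Rightarrow> ('a \<times> 'a) set" where
  "zariski_closure S = \<Inter> {T. zariski_closed T \<and> S \<subseteq> T}"

definition zariski_irreducible :: "('a::comm_semiring_1 \<times> 'a) set \<Rightarrow> bool" where
  "zariski_irreducible M \<longleftrightarrow> M \<noteq> {} \<and> zariski_closed M \<and>
     (\<forall>M1 M2. zariski_closed M1 \<and> zariski_closed M2 \<and> M = M1 \<union> M2 \<longrightarrow> M = M1 \<or> M = M2)"

definition irreducible_component :: "('a::comm_semiring_1 \<times> 'a) set \<Rightarrow> ('a \<times> 'a) set \<Rightarrow> bool" where
  "irreducible_component M X \<longleftrightarrow> M \<subseteq> X \<and> zariski_irreducible M \<and>
     (\<forall>N. zariski_irreducible N \<and> M \<subseteq> N \<and> N \<subseteq> X \<longrightarrow> N = M)"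

definition conchoid_B :: "'a::field poly poly \<Rightarrow> 'a \<times> 'a \<Rightarrow> 'a \<Rightarrow> (('a \<times> 'a) \<times> ('a \<times> 'a) \<times> 'a) set" where
  "conchoid_B f A d = {((x1, x2), (y1, y2), w).
      eval2 f y1 y2 = 0 \<and>
      (x1 - y1)^2 + (x2 - y2)^2 = d^2 \<and>
      (y2 - snd A) * (x1 - y1) - (y1 - fst A) * (x2 - y2) = 0 \<and>
      w * ((y1 - fst A)^2 + (y2 - snd A)^2) = 1}"

definition pi1 :: "('a \<times> 'a) \<times> ('a \<times> 'a) \<times> 'a \<Rightarrow> 'a \<times> 'a" where
  "pi1 p = fst p"

definition pi2 :: "('a \<times> 'a) \<times> ('a \<times> 'a) \<times> 'a \<Rightarrow> 'a \<times> 'a" where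
  "pi2 p = fst (snd p)"

definition conchoid :: "'a::field poly poly \<Rightarrow> 'a \<times> 'a \<Rightarrow> 'a \<Rightarrow> ('a \<times> 'a) set" where
  "conchoid f A d = zariski_closure (pi1 ` conchoid_B f A d)"

text \<open>C_0: points of C not on the isotropic lines through A.\<close>
definition C0 :: "'a::field poly poly \<Rightarrow> 'a \<times> 'a \<Rightarrow> ('a \<times> 'a) set" where
  "C0 f A = {(p1, p2) \<in> curve f. (p1 - fst A)^2 + (p2 - snd A)^2 \<noteq> 0}"

definition simple_component :: "'a::field poly poly \<Rightarrow> 'a \<times> 'a \<Rightarrow> 'a \<Rightarrow> ('a \<times> 'a) set \<Rightarrow> bool" where
  "simple_component f A d M \<longleftrightarrow>
     (\<exists>\<Omega>. \<Omega> \<noteq> {} \<and> \<Omega> \<subseteq> M \<and> zariski_closure \<Omega> = M \<and>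
        (\<forall>Q\<in>\<Omega>. card (pi2 ` (pi1 -` {Q} \<inter> conchoid_B f A d)) = 1))"

definition circle_centered :: "'a::field \<times> 'a \<Rightarrow> 'a \<Rightarrow> ('a \<times> 'a) set" where
  "circle_centered A r = {(y1, y2). (y1 - fst A)^2 + (y2 - snd A)^2 = r^2}"

definition line_through :: "'a::field \<times> 'a \<Rightarrow> ('a \<times> 'a) set \<Rightarrow> bool" where
  "line_through A L \<longleftrightarrow> (\<exists>u v. (u, v) \<noteq> (0, 0) \<and>
      L = {(y1, y2). u * (y1 - fst A) + v * (y2 - snd A) = 0})"

end

theory Submission
  imports Defs
begin

text \<open>A point P of the curve off the isotropic lines through A contributes to the conchoid the
  points P + s (P - A) with s^2 |P - A|^2 = d^2. A point Q \<noteq> A of the conchoid can have two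
  preimages only if one is the reflection P + 2 s (P - A) of the other across Q, so that P is
  also a zero of f composed with that reflection. Eliminating s through the even part in s of
  this condition yields a polynomial in P depending on e = d^2. It vanishes identically on the
  curve for only finitely many e: otherwise it would vanish identically in e at a fixed point
  P, and then f would vanish on the whole line through A and P. For every other d the
  irreducible curve meets it in finitely many points, so all but finitely many points of the
  conchoid have a single preimage. A similar elimination shows that removing finitely many
  points from pi1(B) does not change its Zariski closure. Since a closed subset of the plane
  is the plane itself or a finite union of irreducible curves and points, it follows that every
  irreducible component is the closure of its points with a single preimage.\<close>

lemma eval2_altdef: "eval2 f x y = poly (poly f [:y:]) x"
  unfolding eval2_def
  by (induction f) (auto simp: map_poly_pCons)

lemma eval2_add [simp]: "eval2 (f + g) x y = eval2 f x y + eval2 g x y"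
  by (simp add: eval2_altdef)
lemma eval2_diff [simp]: "eval2 (f - g) x y = eval2 f x y - (eval2 g x y :: 'a :: comm_ring_1)"
  by (simp add: eval2_altdef)
lemma eval2_mult [simp]: "eval2 (f * g) x y = eval2 f x y * eval2 g x y"
  by (simp add: eval2_altdef)
lemma eval2_power [simp]: "eval2 (f ^ n) x y = eval2 f x y ^ n"
  by (simp add: eval2_altdef poly_power)
lemma eval2_const [simp]: "eval2 [:[:c:]:] x y = c"
  by (simp add: eval2_altdef)
lemma eval2_0 [simp]: "eval2 0 x y = 0"
  by (simp add: eval2_altdef)
lemma eval2_1 [simp]: "eval2 1 x y = 1"
  by (simp add: eval2_altdef)
lemma eval2_sum [simp]: "eval2 (sum g S) x y = (\<Sum>i\<in>S. eval2 (g i) x y)"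
  by (induction S rule: infinite_finite_induct) auto

definition restrict_y1 :: "'a::comm_semiring_1 \<Rightarrow> 'a poly poly \<Rightarrow> 'a poly" where
  "restrict_y1 a P = map_poly (\<lambda>c. poly c a) P"

lemma eval2_restrict_y1: "eval2 P a b = poly (restrict_y1 a P) b"
  by (simp add: eval2_def restrict_y1_def)

lemma restrict_y1_eq_0_iff: "restrict_y1 a P = 0 \<longleftrightarrow> (\<forall>j. poly (coeff P j) a = 0)"
  unfolding restrict_y1_def
  by (metis coeff_0 coeff_map_poly leading_coeff_0_iff poly_0 poly_eqI)

definition y1_minus :: "'a::comm_ring_1 \<Rightarrow> 'a poly poly" where
  "y1_minus a = [:[:-a,1:]:]"

lemma y1_minus_dvd_iff:
  fixes a :: "'a::field"
  shows "y1_minus a dvd P \<longleftrightarrow> restrict_y1 a P = 0"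
proof
  assume "y1_minus a dvd P"
  then obtain Q where Q: "P = y1_minus a * Q" by (auto elim: dvdE)
  show "restrict_y1 a P = 0" unfolding restrict_y1_eq_0_iff
    by (simp add: Q y1_minus_def)
next
  assume "restrict_y1 a P = 0"
  then have h: "\<And>j. [:-a,1:] dvd coeff P j" by (simp add: restrict_y1_eq_0_iff poly_eq_0_iff_dvd)
  define Q where "Q = map_poly (\<lambda>q. q div [:-a,1:]) P"
  have "P = y1_minus a * Q"
  proof (rule poly_eqI)
    fix j
    have e: "y1_minus a * Q = smult [:-a,1:] Q" by (simp add: y1_minus_def)
    have "coeff P j = [:-a,1:] * (coeff P j div [:-a,1:])"
      using h[of j] by (metis dvd_mult_div_cancel)
    then show "coeff P j = coeff (y1_minus a * Q) j"
      unfolding e coeff_smult by (simp add: Q_def coeff_map_poly)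
  qed
  then show "y1_minus a dvd P" by simp
qed

lemma restrict_y1_mult: "restrict_y1 a (P * Q) = restrict_y1 a P * restrict_y1 a (Q :: 'a::field_char_0 poly poly)"
proof -
  have "\<forall>b. poly (restrict_y1 a (P * Q)) b = poly (restrict_y1 a P * restrict_y1 a Q) b"
    by (simp flip: eval2_restrict_y1)
  then have "\<forall>b. poly (restrict_y1 a (P * Q) - restrict_y1 a P * restrict_y1 a Q) b = 0" by simp
  then show ?thesis using poly_all_0_iff_0 by (metis eq_iff_diff_eq_0)
qed

lemma y1_minus_dvd_mult:
  fixes a :: "'a::field_char_0"
  assumes "y1_minus a dvd P * Q" shows "y1_minus a dvd P \<or> y1_minus a dvd Q"
  using assms by (simp add: y1_minus_dvd_iff restrict_y1_mult)

lemma eval2_eq_0_imp_eq_0: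
  fixes f :: "'a::field_char_0 poly poly"
  assumes "\<And>x y. eval2 f x y = 0" shows "f = 0"
proof -
  have "\<And>x. restrict_y1 x f = 0" using assms poly_all_0_iff_0 by (metis eval2_restrict_y1)
  then have "\<And>x j. poly (coeff f j) x = 0" by (simp add: restrict_y1_eq_0_iff)
  then have "\<And>j. coeff f j = 0" using poly_all_0_iff_0 by blast
  then show ?thesis using poly_eqI by (metis coeff_0)
qed

lemma is_unit_poly_poly_iff: "(P :: 'a::field poly poly) dvd 1 \<longleftrightarrow> (\<exists>c. c \<noteq> 0 \<and> P = [:[:c:]:])"
  by (auto simp: is_unit_poly_iff dvd_field_iff)

lemma y1_minus_nonzero: "y1_minus a \<noteq> 0" by (simp add: y1_minus_def)
lemma y1_minus_not_unit: "\<not> y1_minus (a::'a::field) dvd 1" by (auto simp: is_unit_poly_poly_iff y1_minus_def)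

lemma irreducible_restrict_y1_nonzero:
  fixes F :: "'a::field_char_0 poly poly"
  assumes "irreducible F" "degree F > 0"
  shows "restrict_y1 a F \<noteq> 0"
proof
  assume "restrict_y1 a F = 0"
  then have "y1_minus a dvd F" by (simp add: y1_minus_dvd_iff)
  then obtain Q where Q: "F = y1_minus a * Q" by (auto elim: dvdE)
  have "Q \<noteq> 0" using Q assms by auto
  then have "degree Q = degree F" using Q by (simp add: degree_mult_eq y1_minus_nonzero y1_minus_def)
  then have "\<not> Q dvd 1" using assms by (auto simp: is_unit_poly_poly_iff)
  then show False using irreducibleD[OF assms(1) Q] y1_minus_not_unit by blast
qed

lemma irreducible_not_y1_minus_dvd:
  fixes F :: "'a::field_char_0 poly poly"
  assumes "irreducible F" "degree F > 0"
  shows "\<not> y1_minus a dvd F"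
  using irreducible_restrict_y1_nonzero[OF assms] by (simp add: y1_minus_dvd_iff)

lemma irreducible_degree_0_vertical_line:
  fixes F :: "'a::{alg_closed_field,field_char_0} poly poly"
  assumes "irreducible F" "degree F = 0"
  shows "\<exists>\<alpha>. \<forall>x y. eval2 F x y = 0 \<longleftrightarrow> x = \<alpha>"
proof -
  define c where "c = coeff F 0"
  have F: "F = [:c:]" using assms(2) by (simp add: c_def degree_0_id)
  have "c \<noteq> 0" using assms F by auto
  have "degree c > 0"
  proof (rule ccontr)
    assume "\<not> degree c > 0"
    then have "c = [:coeff c 0:]" by (simp add: degree_0_id)
    then have "F dvd 1" using F \<open>c \<noteq> 0\<close> by (metis is_unit_poly_poly_iff pCons_0_0)
    then show False using assms(1) irreducible_not_unit by blast
  qed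
  then obtain \<alpha> where "poly c \<alpha> = 0" using alg_closed_imp_poly_has_root by blast
  then obtain c' where c': "c = [:-\<alpha>,1:] * c'" by (auto simp: poly_eq_0_iff_dvd elim: dvdE)
  have "F = y1_minus \<alpha> * [:c':]" by (simp add: F c' y1_minus_def)
  then have "[:c':] dvd 1" using irreducibleD[OF assms(1)] y1_minus_not_unit by blast
  then obtain u where u: "u \<noteq> 0" "c' = [:u:]" by (auto simp: is_unit_poly_poly_iff)
  show ?thesis
    by (rule exI[of _ \<alpha>]) (auto simp: eval2_altdef F c' u)
qed

lemma infinite_non_roots:
  fixes l :: "'a::field_char_0 poly"
  assumes "l \<noteq> 0" shows "infinite {a. poly l a \<noteq> 0}"
proof
  assume "finite {a. poly l a \<noteq> 0}"
  then have "finite ({a. poly l a \<noteq> 0} \<union> {a. poly l a = 0})" using poly_roots_finite[OF assms] by auto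
  moreover have "{a. poly l a \<noteq> 0} \<union> {a. poly l a = 0} = UNIV" by auto
  ultimately show False using infinite_UNIV_char_0 by metis
qed

lemma irreducible_curve_infinite:
  fixes F :: "'a::{alg_closed_field,field_char_0} poly poly"
  assumes "irreducible F"
  shows "infinite (curve F)"
proof (cases "degree F = 0")
  case True
  then obtain \<alpha> where h: "\<And>x y. eval2 F x y = 0 \<longleftrightarrow> x = \<alpha>" using irreducible_degree_0_vertical_line[OF assms] by blast
  have "(\<lambda>y. (\<alpha>, y)) ` UNIV \<subseteq> curve F" by (auto simp: curve_def h)
  moreover have "infinite ((\<lambda>y. (\<alpha>, y)) ` (UNIV :: 'a set))"
    using infinite_UNIV_char_0 finite_imageD[of "\<lambda>y. (\<alpha>, y)" UNIV] by (auto simp: inj_on_def)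
  ultimately show ?thesis using infinite_super by blast
next
  case False
  define l where "l = lead_coeff F"
  have "F \<noteq> 0" using assms by auto
  then have "l \<noteq> 0" by (simp add: l_def)
  have ex: "\<exists>b. eval2 F a b = 0" if "poly l a \<noteq> 0" for a
  proof -
    have "coeff (restrict_y1 a F) (degree F) = poly l a" by (simp add: restrict_y1_def coeff_map_poly l_def)
    then have "degree (restrict_y1 a F) \<ge> degree F" using that le_degree by metis
    then have "degree (restrict_y1 a F) > 0" using False by auto
    then obtain b where "poly (restrict_y1 a F) b = 0" using alg_closed_imp_poly_has_root by blast
    then show ?thesis by (auto simp: eval2_restrict_y1)
  qed
  define g where "g a = (a, SOME b. eval2 F a b = 0)" for a
  have "g ` {a. poly l a \<noteq> 0} \<subseteq> curve F"
    using ex by (auto simp: g_def curve_def intro: someI_ex)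
  moreover have "infinite (g ` {a. poly l a \<noteq> 0})"
    using infinite_non_roots[OF \<open>l \<noteq> 0\<close>] finite_imageD[of g] by (auto simp: inj_on_def g_def)
  ultimately show ?thesis using infinite_super by blast
qed

lemma const_poly_factor_y1_minus:
  fixes c :: "'a::alg_closed_field poly"
  assumes "degree c > 0"
  obtains \<alpha> c1 where "[:c:] = y1_minus \<alpha> * [:c1:]" "c1 \<noteq> 0" "degree c1 < degree c"
proof -
  obtain \<alpha> where "poly c \<alpha> = 0" using alg_closed_imp_poly_has_root assms by blast
  then obtain c1 where c1: "c = [:-\<alpha>,1:] * c1" by (auto simp: poly_eq_0_iff_dvd elim: dvdE)
  then have "c1 \<noteq> 0" using assms by auto
  then have "degree c = Suc (degree c1)" unfolding c1 by (subst degree_mult_eq) auto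
  then show thesis using that[of \<alpha> c1] \<open>c1 \<noteq> 0\<close> by (simp add: c1 y1_minus_def)
qed

text \<open>Gauss-type cancellation: a factor c in K[y1] splits into primes y1 - alpha, none of
  which divides F, since F has positive degree in y2.\<close>

lemma irreducible_dvd_of_const_mult:
  fixes F :: "'a::{alg_closed_field,field_char_0} poly poly"
  assumes "irreducible F" "degree F > 0"
  shows "c \<noteq> 0 \<Longrightarrow> [:c:] * G = H * F \<Longrightarrow> F dvd G"
proof (induction "degree c" arbitrary: c H rule: less_induct)
  case (less c H)
  show ?case
  proof (cases "degree c = 0")
    case True
    then obtain c0 where c0: "c = [:c0:]" "c0 \<noteq> 0" using less.prems True by (metis degree0_coeffs pCons_0_0)
    have "G = [:[:inverse c0:]:] * ([:c:] * G)" using c0 by (simp add: c0 one_pCons[symmetric])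
    also have "\<dots> = ([:[:inverse c0:]:] * H) * F" using less.prems by (simp add: mult.assoc)
    finally show ?thesis by (metis dvd_triv_right)
  next
    case False
    then obtain \<alpha> c' where cc: "[:c:] = y1_minus \<alpha> * [:c':]" "c' \<noteq> 0" "degree c' < degree c"
      using const_poly_factor_y1_minus[of c] by (metis neq0_conv)
    have "y1_minus \<alpha> dvd H * F" using less.prems(2) cc(1) by (metis dvd_triv_left mult.assoc)
    then have "y1_minus \<alpha> dvd H" using y1_minus_dvd_mult irreducible_not_y1_minus_dvd[OF assms] by blast
    then obtain H' where "H = y1_minus \<alpha> * H'" by (auto elim: dvdE)
    then have "y1_minus \<alpha> * ([:c':] * G) = y1_minus \<alpha> * (H' * F)"
      using less.prems(2) cc(1) by (simp add: mult.assoc)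
    then have "[:c':] * G = H' * F" by (metis y1_minus_nonzero mult_left_cancel)
    then show ?thesis by (rule less.hyps[OF cc(3) cc(2)])
  qed
qed

lemma irreducible_dvd_if_factor_dvd:
  fixes F :: "'a::{alg_closed_field,field_char_0} poly poly"
  assumes irr: "irreducible F" "degree F > 0" and R: "degree R > 0" "F = Q * R"
    and G: "c' \<noteq> 0" "[:c':] * G = Q' * R"
  shows "F dvd G"
proof -
  have "\<not> R dvd 1" using R(1) by (auto simp: is_unit_poly_poly_iff)
  then have "Q dvd 1" using irreducibleD[OF irr(1) R(2)] by blast
  then obtain u where u: "u \<noteq> 0" "Q = [:[:u:]:]" by (auto simp: is_unit_poly_poly_iff)
  then have "R = [:[:inverse u:]:] * F" using R(2) by (simp add: one_pCons[symmetric])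
  then have "[:c':] * G = (Q' * [:[:inverse u:]:]) * F" using G(2) by (simp add: mult.assoc)
  then show ?thesis using irreducible_dvd_of_const_mult[OF irr G(1)] by blast
qed

lemma irreducible_dvd_of_common_factor:
  fixes F :: "'a::{alg_closed_field,field_char_0} poly poly"
  assumes "irreducible F" "degree F > 0"
  shows "c \<noteq> 0 \<Longrightarrow> degree R > 0 \<Longrightarrow> [:c:] * F = Q * R \<Longrightarrow> c' \<noteq> 0 \<Longrightarrow> [:c':] * G = Q' * R \<Longrightarrow> F dvd G"
proof (induction "degree c" arbitrary: c Q R Q' rule: less_induct)
  case (less c Q R Q')
  show ?case
  proof (cases "degree c = 0")
    case True
    then obtain c0 where c0: "c = [:c0:]" "c0 \<noteq> 0" using less.prems True by (metis degree0_coeffs pCons_0_0)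
    have "F = [:[:inverse c0:]:] * ([:c:] * F)" using c0 by (simp add: c0 one_pCons[symmetric])
    also have "\<dots> = ([:[:inverse c0:]:] * Q) * R" using less.prems by (simp add: mult.assoc)
    finally show ?thesis
      using irreducible_dvd_if_factor_dvd[OF assms less.prems(2) _ less.prems(4,5)] by blast
  next
    case False
    then obtain \<alpha> c1 where cc: "[:c:] = y1_minus \<alpha> * [:c1:]" "c1 \<noteq> 0" and deg: "degree c1 < degree c"
      using const_poly_factor_y1_minus[of c] by (metis neq0_conv)
    have "y1_minus \<alpha> dvd Q * R" using less.prems(3) cc(1) by (metis dvd_triv_left mult.assoc)
    then have "y1_minus \<alpha> dvd Q \<or> y1_minus \<alpha> dvd R" using y1_minus_dvd_mult by blast
    then show ?thesis
    proof
      assume "y1_minus \<alpha> dvd Q"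
      then obtain Q1 where "Q = y1_minus \<alpha> * Q1" by (auto elim: dvdE)
      then have "y1_minus \<alpha> * ([:c1:] * F) = y1_minus \<alpha> * (Q1 * R)"
        using less.prems(3) cc(1) by (simp add: mult.assoc)
      then have "[:c1:] * F = Q1 * R" by (metis y1_minus_nonzero mult_left_cancel)
      then show ?thesis using less.hyps[OF deg cc(2) less.prems(2)] less.prems(4,5) by blast
    next
      assume "y1_minus \<alpha> dvd R"
      then obtain R1 where R1: "R = y1_minus \<alpha> * R1" by (auto elim: dvdE)
      have "R1 \<noteq> 0" using R1 less.prems(2) by auto
      have dR1: "degree R1 > 0" using R1 less.prems(2) \<open>R1 \<noteq> 0\<close> by (simp add: degree_mult_eq y1_minus_nonzero y1_minus_def)
      have "y1_minus \<alpha> * ([:c1:] * F) = y1_minus \<alpha> * (Q * R1)"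
        using less.prems(3) cc(1) R1 by (simp add: ac_simps)
      then have e1: "[:c1:] * F = Q * R1" by (metis y1_minus_nonzero mult_left_cancel)
      have e2: "[:c':] * G = (Q' * y1_minus \<alpha>) * R1" using less.prems(5) R1 by (simp add: ac_simps)
      show ?thesis using less.hyps[OF deg cc(2) dR1 e1 less.prems(4) e2] .
    qed
  qed
qed

text \<open>A nonzero element R of least y2-degree in the ideal generated by F and G divides
  every element of the ideal up to a nonzero factor in K[y1]: pseudo-division by R leaves
  a remainder in the ideal of smaller degree, which must vanish.\<close>

lemma ideal_least_degree_element:
  fixes F G :: "'a::field poly poly"
  assumes "F \<noteq> 0"
  obtains R U V where "R = U*F + V*G" "R \<noteq> 0"
    "\<And>P U' V'. P = U'*F + V'*G \<Longrightarrow> \<exists>c Q. c \<noteq> 0 \<and> [:c:] * P = Q * R"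
proof -
  define I where "I R \<longleftrightarrow> (\<exists>U V. R = U*F + V*G)" for R
  have IF: "I F" unfolding I_def by (rule exI[of _ 1], rule exI[of _ 0]) simp
  define n where "n = (LEAST n. \<exists>R. I R \<and> R \<noteq> 0 \<and> degree R = n)"
  have "\<exists>R. I R \<and> R \<noteq> 0 \<and> degree R = n"
    unfolding n_def by (rule LeastI_ex) (use IF assms in blast)
  then obtain R where R: "I R" "R \<noteq> 0" "degree R = n" by blast
  have min: "degree R \<le> degree R'" if "I R'" "R' \<noteq> 0" for R'
    unfolding R(3) n_def by (rule Least_le) (use that in blast)
  have "\<exists>c Q. c \<noteq> 0 \<and> [:c:] * P = Q * R" if "P = U1*F + V1*G" for P U1 V1
  proof -
    obtain q r where qr: "pseudo_divmod P R = (q, r)" by (cases "pseudo_divmod P R") auto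
    define e where "e = coeff R (degree R) ^ (Suc (degree P) - degree R)"
    have e0: "e \<noteq> 0" using R(2) by (simp add: e_def)
    have eq: "smult e P = R * q + r" and deg: "r = 0 \<or> degree r < degree R"
      using pseudo_divmod[OF R(2) qr] by (simp_all add: e_def)
    obtain U2 V2 where R2: "R = U2*F + V2*G" using R(1) I_def by blast
    have "r = smult e P - R * q" using eq by simp
    also have "\<dots> = (smult e U1 - q*U2)*F + (smult e V1 - q*V2)*G"
      unfolding that R2 by (simp add: algebra_simps smult_add_right)
    finally have "I r" unfolding I_def by blast
    then have "r = 0" using min deg by fastforce
    then have "[:e:] * P = q * R" using eq by (simp add: mult.commute)
    then show ?thesis using e0 by blast
  qed
  then show thesis using that R(1,2) unfolding I_def by blast
qed

lemma irreducible_dvd_if_infinite_common_zeros: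
  fixes F G :: "'a::{alg_closed_field,field_char_0} poly poly"
  assumes irr: "irreducible F" and dF: "degree F > 0"
    and inf: "infinite {(x,y). eval2 F x y = 0 \<and> eval2 G x y = 0}"
  shows "F dvd G"
proof -
  have "F \<noteq> 0" using irr by auto
  then obtain R U V where R: "R = U*F + V*G" "R \<noteq> 0"
    and div: "\<And>P U' V'. P = U'*F + V'*G \<Longrightarrow> \<exists>c Q. c \<noteq> 0 \<and> [:c:] * P = Q * R"
    using ideal_least_degree_element[of F G] by metis
  obtain c Q where cQ: "c \<noteq> 0" "[:c:] * F = Q * R" using div[of F 1 0] by auto
  obtain c' Q' where cQ': "c' \<noteq> 0" "[:c':] * G = Q' * R" using div[of G 0 1] by auto
  show ?thesis
  proof (cases "degree R > 0")
    case True
    show ?thesis by (rule irreducible_dvd_of_common_factor[OF irr dF cQ(1) True cQ(2) cQ'(1) cQ'(2)])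
  next
    case False
    then obtain r0 where r0: "R = [:r0:]" "r0 \<noteq> 0" using R(2) by (metis degree0_coeffs neq0_conv pCons_0_0)
    have "{(x,y). eval2 F x y = 0 \<and> eval2 G x y = 0} \<subseteq>
        Sigma {x. poly r0 x = 0} (\<lambda>x. {y. poly (restrict_y1 x F) y = 0})"
    proof clarify
      fix x y assume h: "eval2 F x y = 0" "eval2 G x y = 0"
      then have "eval2 R x y = 0" unfolding R(1) by simp
      then have "poly r0 x = 0" by (simp add: r0 eval2_altdef)
      then show "x \<in> {x. poly r0 x = 0} \<and> y \<in> {y. poly (restrict_y1 x F) y = 0}"
        using h(1) by (simp add: eval2_restrict_y1)
    qed
    moreover have "finite (Sigma {x. poly r0 x = 0} (\<lambda>x. {y. poly (restrict_y1 x F) y = 0}))"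
      by (rule finite_SigmaI) (use poly_roots_finite r0(2) irreducible_restrict_y1_nonzero[OF irr dF] in auto)
    ultimately show ?thesis using inf finite_subset by blast
  qed
qed

lemma vanishes_on_curve_if_infinite_common_zeros:
  fixes F G :: "'a::{alg_closed_field,field_char_0} poly poly"
  assumes irr: "irreducible F"
    and inf: "infinite {(x,y). eval2 F x y = 0 \<and> eval2 G x y = 0}"
    and p: "eval2 F x y = 0"
  shows "eval2 G x y = 0"
proof (cases "degree F = 0")
  case True
  then obtain \<alpha> where h: "\<And>x y. eval2 F x y = 0 \<longleftrightarrow> x = \<alpha>" using irreducible_degree_0_vertical_line[OF irr] by blast
  have "restrict_y1 \<alpha> G = 0"
  proof (rule ccontr)
    assume "restrict_y1 \<alpha> G \<noteq> 0"
    then have "finite ((\<lambda>y. (\<alpha>, y)) ` {y. poly (restrict_y1 \<alpha> G) y = 0})" using poly_roots_finite by blast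
    moreover have "{(x,y). eval2 F x y = 0 \<and> eval2 G x y = 0} \<subseteq> (\<lambda>y. (\<alpha>, y)) ` {y. poly (restrict_y1 \<alpha> G) y = 0}"
    proof clarify
      fix a b assume "eval2 F a b = 0" "eval2 G a b = 0"
      then have "a = \<alpha>" "poly (restrict_y1 \<alpha> G) b = 0" using h by (auto simp: eval2_restrict_y1)
      then show "(a, b) \<in> (\<lambda>y. (\<alpha>, y)) ` {y. poly (restrict_y1 \<alpha> G) y = 0}" by auto
    qed
    ultimately show False using inf finite_subset by blast
  qed
  then show ?thesis using p h by (simp add: eval2_restrict_y1)
next
  case False
  then have "F dvd G" using irreducible_dvd_if_infinite_common_zeros[OF irr _ inf] by simp
  then obtain H where "G = F * H" by (auto elim: dvdE)
  then show ?thesis using p by simp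
qed

lemma finite_common_zeros:
  fixes F G :: "'a::{alg_closed_field,field_char_0} poly poly"
  assumes irr: "irreducible F" and "eval2 F x y = 0" "eval2 G x y \<noteq> 0"
  shows "finite {(x,y). eval2 F x y = 0 \<and> eval2 G x y = 0}"
  using vanishes_on_curve_if_infinite_common_zeros[OF irr] assms by blast

definition zero_set :: "'a::comm_semiring_1 poly poly set \<Rightarrow> ('a \<times> 'a) set" where
  "zero_set P = {(x1, x2). \<forall>g\<in>P. eval2 g x1 x2 = 0}"

lemma zariski_closed_iff: "zariski_closed S \<longleftrightarrow> (\<exists>P. S = zero_set P)"
  by (simp add: zariski_closed_def zero_set_def)

lemma mem_zero_set: "(x,y) \<in> zero_set P \<longleftrightarrow> (\<forall>g\<in>P. eval2 g x y = 0)"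
  by (simp add: zero_set_def)

lemma zariski_closed_zero_set: "zariski_closed (zero_set P)" by (auto simp: zariski_closed_iff)

lemma zariski_closed_Inter:
  assumes "\<forall>S\<in>\<S>. zariski_closed S" shows "zariski_closed (\<Inter>\<S>)"
proof -
  from assms obtain fP where fP: "\<forall>S\<in>\<S>. S = zero_set (fP S)" unfolding zariski_closed_iff by metis
  have "\<Inter>\<S> = (\<Inter>S\<in>\<S>. zero_set (fP S))" using fP by blast
  also have "\<dots> = zero_set (\<Union>S\<in>\<S>. fP S)" by (auto simp: zero_set_def)
  finally have "\<Inter>\<S> = zero_set (\<Union>S\<in>\<S>. fP S)" .
  then show ?thesis by (simp add: zariski_closed_zero_set)
qed

lemma zariski_closed_Int: "zariski_closed A \<Longrightarrow> zariski_closed B \<Longrightarrow> zariski_closed (A \<inter> B)"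
  using zariski_closed_Inter[of "{A,B}"] by auto

lemma zariski_closed_Un:
  fixes A :: "('a::{comm_semiring_1,semiring_no_zero_divisors} \<times> 'a) set"
  assumes "zariski_closed A" "zariski_closed B" shows "zariski_closed (A \<union> B)"
proof -
  obtain P Q where A: "A = zero_set P" and B: "B = zero_set Q" using assms by (auto simp: zariski_closed_iff)
  have "A \<union> B = zero_set {p * q | p q. p \<in> P \<and> q \<in> Q}"
  proof (intro set_eqI iffI)
    fix z assume "z \<in> A \<union> B" then show "z \<in> zero_set {p * q | p q. p \<in> P \<and> q \<in> Q}"
      by (cases z) (auto simp: A B zero_set_def)
  next
    fix z assume z: "z \<in> zero_set {p * q | p q. p \<in> P \<and> q \<in> Q}"
    obtain x y where xy: "z = (x, y)" by (cases z)
    show "z \<in> A \<union> B"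
    proof (cases "z \<in> A")
      case False
      then obtain p where p: "p \<in> P" "eval2 p x y \<noteq> 0" by (auto simp: A zero_set_def xy)
      have "\<forall>q\<in>Q. eval2 q x y = 0"
      proof
        fix q assume "q \<in> Q"
        then have "p * q \<in> {p * q | p q. p \<in> P \<and> q \<in> Q}" using p(1) by blast
        moreover have "\<forall>g\<in>{p * q | p q. p \<in> P \<and> q \<in> Q}. eval2 g x y = 0"
          using z by (simp only: xy mem_zero_set)
        ultimately have "eval2 (p * q) x y = 0" by (rule bspec[rotated])
        then show "eval2 q x y = 0" using p by simp
      qed
      then show ?thesis by (simp add: B zero_set_def xy)
    qed simp
  qed
  then show ?thesis by (simp add: zariski_closed_zero_set)
qed

lemma zariski_closed_empty: "zariski_closed ({} :: ('a::comm_semiring_1 \<times> 'a) set)"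
proof -
  have "({} :: ('a \<times> 'a) set) = zero_set {1}" by (auto simp: zero_set_def)
  then show ?thesis by (metis zariski_closed_zero_set)
qed

lemma zariski_closed_UNIV: "zariski_closed (UNIV :: ('a::comm_semiring_1 \<times> 'a) set)"
proof -
  have "(UNIV :: ('a \<times> 'a) set) = zero_set {}" by (auto simp: zero_set_def)
  then show ?thesis by (metis zariski_closed_zero_set)
qed

lemma zariski_closed_singleton: "zariski_closed {(a::'a::comm_ring_1, b)}"
proof -
  have e1: "eval2 [:[:-a,1:]:] x y = x - a" for x y by (simp add: eval2_altdef)
  have e2: "eval2 [:[:-b:],1:] x y = y - b" for x y by (simp add: eval2_altdef)
  have "{(a, b)} = zero_set {[:[:-a,1:]:], [:[:-b:],1:]}" by (auto simp: zero_set_def e1 e2)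
  then show ?thesis by (simp add: zariski_closed_zero_set)
qed

lemma zariski_closed_finite:
  fixes S :: "('a::{comm_ring_1,semiring_no_zero_divisors} \<times> 'a) set"
  shows "finite S \<Longrightarrow> zariski_closed S"
proof (induction rule: finite_induct)
  case empty then show ?case by (rule zariski_closed_empty)
next
  case (insert z S)
  have "insert z S = {z} \<union> S" by auto
  then show ?case using zariski_closed_Un[OF zariski_closed_singleton[of "fst z" "snd z"] insert.IH] by simp
qed

lemma zariski_closed_Union:
  fixes \<F> :: "('a::{comm_semiring_1,semiring_no_zero_divisors} \<times> 'a) set set"
  shows "finite \<F> \<Longrightarrow> \<forall>A\<in>\<F>. zariski_closed A \<Longrightarrow> zariski_closed (\<Union>\<F>)"
proof (induction rule: finite_induct)
  case empty then show ?case by (simp add: zariski_closed_empty)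
next
  case (insert B \<G>) then show ?case by (auto intro: zariski_closed_Un)
qed

lemma zariski_closed_curve: "zariski_closed (curve g)"
proof -
  have "curve g = zero_set {g}" by (auto simp: zero_set_def curve_def)
  then show ?thesis by (simp add: zariski_closed_zero_set)
qed

lemma zariski_closed_curves_Un:
  fixes \<G> :: "'a::{comm_ring_1,semiring_no_zero_divisors} poly poly set"
  assumes "finite \<G>" "finite E"
  shows "zariski_closed ((\<Union>G\<in>\<G>. curve G) \<union> E)"
  using assms by (intro zariski_closed_Un zariski_closed_Union zariski_closed_finite) (auto simp: zariski_closed_curve)

lemma zariski_closed_closure: "zariski_closed (zariski_closure S)"
  unfolding zariski_closure_def by (rule zariski_closed_Inter) auto

lemma zariski_closure_subset: "S \<subseteq> zariski_closure S"
  unfolding zariski_closure_def by auto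

lemma zariski_closure_minimal: "zariski_closed T \<Longrightarrow> S \<subseteq> T \<Longrightarrow> zariski_closure S \<subseteq> T"
  unfolding zariski_closure_def by auto

lemma zariski_closure_closed: "zariski_closed S \<Longrightarrow> zariski_closure S = S"
  using zariski_closure_minimal zariski_closure_subset by blast

lemma zariski_closure_mono: "S \<subseteq> T \<Longrightarrow> zariski_closure S \<subseteq> zariski_closure T"
  using zariski_closure_minimal[OF zariski_closed_closure] zariski_closure_subset by blast

lemma zariski_closure_Un:
  fixes S :: "('a::{comm_semiring_1,semiring_no_zero_divisors} \<times> 'a) set"
  shows "zariski_closure (S \<union> T) = zariski_closure S \<union> zariski_closure T"
proof
  show "zariski_closure (S \<union> T) \<subseteq> zariski_closure S \<union> zariski_closure T"
    by (rule zariski_closure_minimal) (auto intro: zariski_closed_Un zariski_closed_closure dest: zariski_closure_subset[THEN subsetD])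
  show "zariski_closure S \<union> zariski_closure T \<subseteq> zariski_closure (S \<union> T)"
    using zariski_closure_mono by blast
qed

lemma zariski_closure_empty_iff: "zariski_closure S = {} \<longleftrightarrow> S = {}"
  using zariski_closure_subset zariski_closure_closed[OF zariski_closed_empty] by blast

lemma zariski_irreducible_subset_Un:
  assumes "zariski_irreducible M" "M \<subseteq> A \<union> B" "zariski_closed A" "zariski_closed B"
  shows "M \<subseteq> A \<or> M \<subseteq> B"
proof -
  have "M = (M \<inter> A) \<union> (M \<inter> B)" using assms(2) by auto
  moreover have "zariski_closed M" using assms(1) by (simp add: zariski_irreducible_def)
  ultimately have "M = M \<inter> A \<or> M = M \<inter> B"
    using assms(1,3,4) zariski_closed_Int unfolding zariski_irreducible_def by blast
  then show ?thesis by blast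
qed

lemma zariski_irreducible_subset_Union:
  assumes "zariski_irreducible M" "finite \<F>" "\<forall>A\<in>\<F>. zariski_closed (A :: ('a::{comm_semiring_1,semiring_no_zero_divisors} \<times> 'a) set)"
    "M \<subseteq> \<Union>\<F>"
  shows "\<exists>A\<in>\<F>. M \<subseteq> A"
  using assms(2,3,4)
proof (induction rule: finite_induct)
  case empty then show ?case using assms(1) by (auto simp: zariski_irreducible_def)
next
  case (insert A \<F>)
  have cl: "zariski_closed (\<Union>\<F>)"
    using zariski_closed_Union[OF insert.hyps(1)] insert.prems(1) by simp
  have "M \<subseteq> A \<union> \<Union>\<F>" using insert.prems by auto
  then have "M \<subseteq> A \<or> M \<subseteq> \<Union>\<F>" using zariski_irreducible_subset_Un[OF assms(1)] insert.prems(1) cl by blast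
  then show ?case using insert by blast
qed

lemma zariski_irreducible_finite_singleton:
  fixes M :: "('a::{comm_ring_1,semiring_no_zero_divisors} \<times> 'a) set"
  assumes "zariski_irreducible M" "finite M"
  shows "\<exists>Q. M = {Q}"
proof -
  obtain Q where "Q \<in> M" using assms(1) by (auto simp: zariski_irreducible_def)
  have "M = {Q} \<union> (M - {Q})" using \<open>Q \<in> M\<close> by auto
  then have "M = {Q} \<or> M = M - {Q}"
    using assms(1) zariski_closed_finite[of "{Q}"] zariski_closed_finite[of "M - {Q}"] assms(2)
    unfolding zariski_irreducible_def by blast
  then show ?thesis using \<open>Q \<in> M\<close> by blast
qed

lemma finite_proper_closed_subset_curve:
  fixes G :: "'a::{alg_closed_field,field_char_0} poly poly"
  assumes irr: "irreducible G" and "zariski_closed Z" "Z \<subseteq> curve G" "Z \<noteq> curve G"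
  shows "finite Z"
proof -
  obtain P where Z: "Z = zero_set P" using assms(2) by (auto simp: zariski_closed_iff)
  obtain x y where p: "(x, y) \<in> curve G" "(x, y) \<notin> Z" using assms(3,4) by auto
  then obtain g where g: "g \<in> P" "eval2 g x y \<noteq> 0" by (auto simp: Z zero_set_def)
  have "finite {(x,y). eval2 G x y = 0 \<and> eval2 g x y = 0}"
    using finite_common_zeros[OF irr _ g(2)] p by (auto simp: curve_def)
  moreover have "Z \<subseteq> {(x,y). eval2 G x y = 0 \<and> eval2 g x y = 0}"
    using assms(3) g(1) by (auto simp: Z zero_set_def curve_def)
  ultimately show ?thesis using finite_subset by blast
qed

lemma zariski_irreducible_curve:
  fixes G :: "'a::{alg_closed_field,field_char_0} poly poly"
  assumes irr: "irreducible G"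
  shows "zariski_irreducible (curve G)"
  unfolding zariski_irreducible_def
proof (intro conjI allI impI)
  show "curve G \<noteq> {}" using irreducible_curve_infinite[OF irr] by auto
  show "zariski_closed (curve G)" by (rule zariski_closed_curve)
  fix M1 M2 assume h: "zariski_closed M1 \<and> zariski_closed M2 \<and> curve G = M1 \<union> M2"
  show "curve G = M1 \<or> curve G = M2"
  proof (rule ccontr)
    assume "\<not> (curve G = M1 \<or> curve G = M2)"
    then have "finite M1" "finite M2" using h finite_proper_closed_subset_curve[OF irr] by blast+
    then show False using h irreducible_curve_infinite[OF irr] by auto
  qed
qed

lemma zariski_irreducible_UNIV:
  "zariski_irreducible (UNIV :: ('a::field_char_0 \<times> 'a) set)"
  unfolding zariski_irreducible_def
proof (intro conjI allI impI)
  show "(UNIV :: ('a \<times> 'a) set) \<noteq> {}" by simp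
  show "zariski_closed (UNIV :: ('a \<times> 'a) set)" by (rule zariski_closed_UNIV)
  fix M1 M2 :: "('a \<times> 'a) set"
  assume h: "zariski_closed M1 \<and> zariski_closed M2 \<and> UNIV = M1 \<union> M2"
  show "UNIV = M1 \<or> UNIV = M2"
  proof (rule ccontr)
    assume nn: "\<not> (UNIV = M1 \<or> UNIV = M2)"
    obtain P1 P2 where P: "M1 = zero_set P1" "M2 = zero_set P2" using h by (auto simp: zariski_closed_iff)
    obtain x1 y1 where "(x1, y1) \<notin> M1" using nn by auto
    then obtain g1 where g1: "g1 \<in> P1" "eval2 g1 x1 y1 \<noteq> 0" by (auto simp: P zero_set_def)
    obtain x2 y2 where "(x2, y2) \<notin> M2" using nn by auto
    then obtain g2 where g2: "g2 \<in> P2" "eval2 g2 x2 y2 \<noteq> 0" by (auto simp: P zero_set_def)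
    have "eval2 (g1 * g2) x y = 0" for x y
    proof -
      have "(x, y) \<in> M1 \<union> M2" using h by auto
      then show ?thesis using g1 g2 by (auto simp: P zero_set_def)
    qed
    then have "g1 * g2 = 0" by (rule eval2_eq_0_imp_eq_0)
    then have "g1 = 0 \<or> g2 = 0" by simp
    then show False using g1 g2 by auto
  qed
qed

text \<open>Polynomials in y1, y2 and an auxiliary parameter s, the outermost variable.\<close>

definition eval3 :: "'a::comm_semiring_1 poly poly poly \<Rightarrow> 'a \<Rightarrow> 'a \<Rightarrow> 'a \<Rightarrow> 'a" where
  "eval3 h x y s = poly (map_poly (\<lambda>q. eval2 q x y) h) s"

lemma eval3_altdef: "eval3 h x y s = poly (poly (poly h [:[:s:]:]) [:y:]) x"
  unfolding eval3_def
  by (induction h) (auto simp: map_poly_pCons eval2_altdef)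

lemma eval3_add [simp]: "eval3 (f + g) x y s = eval3 f x y s + eval3 g x y s"
  by (simp add: eval3_altdef)
lemma eval3_mult [simp]: "eval3 (f * g) x y s = eval3 f x y s * eval3 g x y s"
  by (simp add: eval3_altdef)
lemma eval3_power [simp]: "eval3 (f ^ n) x y s = eval3 f x y s ^ n"
  by (simp add: eval3_altdef poly_power)
lemma eval3_0 [simp]: "eval3 0 x y s = 0"
  by (simp add: eval3_altdef)
lemma eval3_sum [simp]: "eval3 (sum g S) x y s = (\<Sum>i\<in>S. eval3 (g i) x y s)"
  by (induction S rule: infinite_finite_induct) auto
lemma eval3_lift [simp]: "eval3 [:g:] x y s = eval2 g x y"
  by (simp add: eval3_altdef eval2_altdef)

lemma poly_as_sum_le:
  fixes p :: "'a::comm_semiring_1 poly"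
  assumes "degree p \<le> n" shows "poly p x = (\<Sum>i\<le>n. coeff p i * x ^ i)"
proof -
  have "poly p x = (\<Sum>i\<le>degree p. coeff p i * x ^ i)" by (rule poly_altdef)
  also have "\<dots> = (\<Sum>i\<le>n. coeff p i * x ^ i)"
    by (rule sum.mono_neutral_left) (use assms in \<open>auto simp: coeff_eq_0\<close>)
  finally show ?thesis .
qed

lemma eval2_sum_form:
  "eval2 g u v = (\<Sum>j\<le>degree g. \<Sum>i\<le>degree (coeff g j). coeff (coeff g j) i * u ^ i * v ^ j)"
proof -
  have "eval2 g u v = (\<Sum>j\<le>degree g. coeff (map_poly (\<lambda>c. poly c u) g) j * v ^ j)"
    unfolding eval2_def by (rule poly_as_sum_le) (rule map_poly_degree_leq)
  also have "\<dots> = (\<Sum>j\<le>degree g. poly (coeff g j) u * v ^ j)"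
    by (simp add: coeff_map_poly)
  also have "\<dots> = (\<Sum>j\<le>degree g. \<Sum>i\<le>degree (coeff g j). coeff (coeff g j) i * u ^ i * v ^ j)"
    by (simp add: poly_altdef sum_distrib_right)
  finally show ?thesis .
qed

lemma eval3_sum_form:
  "eval3 h x y s = (\<Sum>k\<le>degree h. eval2 (coeff h k) x y * s ^ k)"
proof -
  have "eval3 h x y s = (\<Sum>k\<le>degree h. coeff (map_poly (\<lambda>q. eval2 q x y) h) k * s ^ k)"
    unfolding eval3_def by (rule poly_as_sum_le) (rule map_poly_degree_leq)
  then show ?thesis by (simp add: coeff_map_poly)
qed

definition comp3 :: "'a::comm_semiring_1 poly poly \<Rightarrow> 'a poly poly poly \<Rightarrow> 'a poly poly poly \<Rightarrow> 'a poly poly poly" where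
  "comp3 g P Q = (\<Sum>j\<le>degree g. \<Sum>i\<le>degree (coeff g j). [:[:[:coeff (coeff g j) i:]:]:] * P ^ i * Q ^ j)"

lemma eval3_smult [simp]: "eval3 (smult c h) x y s = eval2 c x y * eval3 h x y s"
  by (simp add: eval3_altdef eval2_altdef)

lemma eval3_comp3: "eval3 (comp3 g P Q) x y s = eval2 g (eval3 P x y s) (eval3 Q x y s)"
  by (simp add: comp3_def eval2_sum_form mult.assoc)

definition dilate_poly :: "'a::comm_ring_1 \<Rightarrow> 'a poly poly \<Rightarrow> 'a \<Rightarrow> 'a \<Rightarrow> 'a poly poly poly" where
  "dilate_poly c g a b = comp3 g ([:[:[:0,1:]:]:] + [:[:[:c:]:]:] * [:0,1:] * [:[:[:-a,1:]:]:])
                                 ([:[:0,1:]:] + [:[:[:c:]:]:] * [:0,1:] * [:[:[:-b:],1:]:])"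

lemma eval3_dilate_poly:
  "eval3 (dilate_poly c g a b) x y s = eval2 g (x + c * s * (x - a)) (y + c * s * (y - b))"
proof -
  have "eval3 ([:[:[:0,1:]:]:] + [:[:[:c:]:]:] * [:0,1:] * [:[:[:-a,1:]:]:]) x y s = x + c * s * (x - a)"
       "eval3 ([:[:0,1:]:] + [:[:[:c:]:]:] * [:0,1:] * [:[:[:-b:],1:]:]) x y s = y + c * s * (y - b)"
    by (simp_all add: eval3_altdef eval2_altdef algebra_simps)
  then show ?thesis by (simp add: dilate_poly_def eval3_comp3)
qed

text \<open>Eliminating s: on the quadric s^2 N(x,y) = e, the even part h(s) + h(-s) of a
  polynomial h in x, y, s, multiplied by N^(degree h), is twice a polynomial in x, y and e.\<close>

definition even_part :: "'a::comm_semiring_1 poly poly poly \<Rightarrow> 'a poly poly \<Rightarrow> 'a \<Rightarrow> 'a \<Rightarrow> 'a \<Rightarrow> 'a" where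
  "even_part h N e x y = (\<Sum>k\<le>degree h. if even k then e ^ (k div 2) * eval2 (coeff h k) x y * eval2 N x y ^ (degree h - k div 2) else 0)"

lemma even_part_eq:
  fixes h :: "'a::field_char_0 poly poly poly"
  assumes "s ^ 2 * eval2 N x y = e"
  shows "(eval3 h x y s + eval3 h x y (-s)) * eval2 N x y ^ degree h = 2 * even_part h N e x y"
proof -
  let ?N = "eval2 N x y" and ?n = "degree h"
  have "(eval3 h x y s + eval3 h x y (-s)) * ?N ^ ?n =
        (\<Sum>k\<le>?n. eval2 (coeff h k) x y * s ^ k + eval2 (coeff h k) x y * (-s) ^ k) * ?N ^ ?n"
    by (simp only: eval3_sum_form sum.distrib)
  also have "\<dots> = (\<Sum>k\<le>?n. eval2 (coeff h k) x y * (s ^ k + (-s) ^ k) * ?N ^ ?n)"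
    by (simp add: sum_distrib_right distrib_left)
  also have "\<dots> = (\<Sum>k\<le>?n. 2 * (if even k then e ^ (k div 2) * eval2 (coeff h k) x y * ?N ^ (?n - k div 2) else 0))"
  proof (rule sum.cong[OF refl])
    fix k assume k: "k \<in> {..?n}"
    show "eval2 (coeff h k) x y * (s ^ k + (-s) ^ k) * ?N ^ ?n =
          2 * (if even k then e ^ (k div 2) * eval2 (coeff h k) x y * ?N ^ (?n - k div 2) else 0)"
    proof (cases "even k")
      case True
      then obtain j where j: "k = 2 * j" by blast
      have "j \<le> ?n" using k j by auto
      let ?c = "eval2 (coeff h k) x y"
      have n: "?N ^ ?n = ?N ^ j * ?N ^ (?n - j)" using \<open>j \<le> ?n\<close> by (simp add: power_add[symmetric])
      have sk: "s ^ k = (s ^ 2) ^ j" by (simp add: j power_mult)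
      have e1: "s ^ k * ?N ^ ?n = e ^ j * ?N ^ (?n - j)"
        by (simp add: n sk assms[symmetric] power_mult_distrib mult.assoc)
      have e2: "(-s) ^ k = s ^ k" using True by simp
      have "?c * (s ^ k + (-s) ^ k) * ?N ^ ?n = 2 * (?c * (s ^ k * ?N ^ ?n))"
        by (simp add: e2 algebra_simps)
      also have "\<dots> = 2 * (e ^ (k div 2) * ?c * ?N ^ (?n - k div 2))" using e1 j by simp
      finally show ?thesis using True by simp
    next
      case False
      then show ?thesis by simp
    qed
  qed
  also have "\<dots> = 2 * even_part h N e x y" by (simp add: even_part_def sum_distrib_left)
  finally show ?thesis .
qed

lemma even_part_poly_xy: "\<exists>H. \<forall>x y. even_part h N e x y = eval2 H x y"
proof -
  define H where "H = (\<Sum>k\<le>degree h. if even k then [:[:e ^ (k div 2):]:] * coeff h k * N ^ (degree h - k div 2) else 0)"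
  have "even_part h N e x y = eval2 H x y" for x y
    unfolding H_def even_part_def eval2_sum by (rule sum.cong[OF refl]) (simp add: eval2_altdef mult.assoc)
  then show ?thesis by blast
qed

lemma even_part_poly_e: "\<exists>p. \<forall>e. even_part h N e x y = poly p e"
proof -
  define p where "p = (\<Sum>k\<le>degree h. if even k then monom (eval2 (coeff h k) x y * eval2 N x y ^ (degree h - k div 2)) (k div 2) else 0)"
  have "even_part h N e x y = poly p e" for e
    unfolding p_def even_part_def poly_sum by (rule sum.cong[OF refl]) (simp add: poly_monom algebra_simps)
  then show ?thesis by blast
qed

definition lead_bidegree :: "'a::zero poly poly \<Rightarrow> nat" where
  "lead_bidegree g = degree g + degree (lead_coeff g)"

lemma lead_bidegree_mult:
  fixes a b :: "'a::idom poly poly"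
  assumes "a \<noteq> 0" "b \<noteq> 0" shows "lead_bidegree (a * b) = lead_bidegree a + lead_bidegree b"
proof -
  have "lead_coeff a \<noteq> 0" "lead_coeff b \<noteq> 0" using assms by auto
  then have "degree (lead_coeff a * lead_coeff b) = degree (lead_coeff a) + degree (lead_coeff b)"
    by (rule degree_mult_eq)
  moreover have "lead_coeff (a * b) = lead_coeff a * lead_coeff b" by (rule lead_coeff_mult)
  ultimately show ?thesis unfolding lead_bidegree_def using degree_mult_eq[OF assms] by (metis add.assoc add.left_commute)
qed

lemma lead_bidegree_pos:
  fixes b :: "'a::field poly poly"
  assumes "b \<noteq> 0" "\<not> b dvd 1" shows "lead_bidegree b > 0"
proof (rule ccontr)
  assume "\<not> lead_bidegree b > 0"
  then have d1: "degree b = 0" and d2: "degree (coeff b 0) = 0" by (auto simp: lead_bidegree_def)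
  have e1: "b = [:coeff b 0:]" using d1 by (simp add: degree_0_id)
  have e2: "coeff b 0 = [:coeff (coeff b 0) 0:]" using d2 by (simp add: degree_0_id)
  have "b = [:[:coeff (coeff b 0) 0:]:]" using e1 e2 by simp
  moreover have "coeff (coeff b 0) 0 \<noteq> 0" using assms(1) e1 e2 by (metis pCons_0_0)
  ultimately have "b dvd 1" by (auto simp: is_unit_poly_poly_iff)
  then show False using assms(2) by blast
qed

lemma curve_mult: "curve (a * b) = curve a \<union> curve (b :: 'a::idom poly poly)"
  by (auto simp: curve_def)

definition curve_decomposable :: "('a::comm_semiring_1 \<times> 'a) set \<Rightarrow> bool" where
  "curve_decomposable Z \<longleftrightarrow> (\<exists>\<G> E. finite \<G> \<and> finite E \<and>
     (\<forall>G\<in>\<G>. irreducible G \<and> curve G \<subseteq> Z) \<and> Z = (\<Union>G\<in>\<G>. curve G) \<union> E)"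

lemma curve_decomposable_finite: "finite Z \<Longrightarrow> curve_decomposable Z"
  unfolding curve_decomposable_def by (intro exI[of _ "{}"] exI[of _ Z]) auto

lemma curve_decomposable_curve: "irreducible G \<Longrightarrow> curve_decomposable (curve G)"
  unfolding curve_decomposable_def by (intro exI[of _ "{G}"] exI[of _ "{}"]) auto

lemma curve_decomposable_Un:
  assumes "curve_decomposable A" "curve_decomposable B"
  shows "curve_decomposable (A \<union> B)"
proof -
  obtain \<G>1 E1 where 1: "finite \<G>1" "finite E1" "\<forall>G\<in>\<G>1. irreducible G \<and> curve G \<subseteq> A"
      "A = (\<Union>G\<in>\<G>1. curve G) \<union> E1"
    using assms(1) by (auto simp: curve_decomposable_def)
  obtain \<G>2 E2 where 2: "finite \<G>2" "finite E2" "\<forall>G\<in>\<G>2. irreducible G \<and> curve G \<subseteq> B"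
      "B = (\<Union>G\<in>\<G>2. curve G) \<union> E2"
    using assms(2) by (auto simp: curve_decomposable_def)
  show ?thesis unfolding curve_decomposable_def
    using 1 2 by (intro exI[of _ "\<G>1 \<union> \<G>2"] exI[of _ "E1 \<union> E2"]) auto
qed

text \<open>Induction on a degree measure of a polynomial vanishing on Z: its proper factors have
  smaller measure, and Z splits along them.\<close>

lemma curve_decomposable_subset_curve:
  fixes g :: "'a::{alg_closed_field,field_char_0} poly poly"
  shows "g \<noteq> 0 \<Longrightarrow> zariski_closed Z \<Longrightarrow> Z \<subseteq> curve g \<Longrightarrow> curve_decomposable Z"
proof (induction "lead_bidegree g" arbitrary: g Z rule: less_induct)
  case (less g Z)
  consider "g dvd 1" | "irreducible g" | a b where "g = a * b" "\<not> a dvd 1" "\<not> b dvd 1"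
    using less.prems(1) unfolding irreducible_def by blast
  then show ?case
  proof cases
    case 1
    then have "curve g = {}" by (auto simp: is_unit_poly_poly_iff curve_def)
    then show ?thesis using less.prems(3) curve_decomposable_finite by (metis finite.emptyI subset_empty)
  next
    case 2
    then show ?thesis
      using finite_proper_closed_subset_curve[OF 2 less.prems(2,3)]
        curve_decomposable_curve curve_decomposable_finite by metis
  next
    case (3 a b)
    have "a \<noteq> 0" "b \<noteq> 0" using 3 less.prems(1) by auto
    have "lead_bidegree g = lead_bidegree a + lead_bidegree b"
      using lead_bidegree_mult[OF \<open>a \<noteq> 0\<close> \<open>b \<noteq> 0\<close>] 3(1) by simp
    moreover have "lead_bidegree a > 0" "lead_bidegree b > 0"
      using lead_bidegree_pos \<open>a \<noteq> 0\<close> \<open>b \<noteq> 0\<close> 3(2,3) by blast+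
    ultimately have "lead_bidegree a < lead_bidegree g" "lead_bidegree b < lead_bidegree g" by simp_all
    moreover have "zariski_closed (Z \<inter> curve h)" for h
      using zariski_closed_Int[OF less.prems(2) zariski_closed_curve] .
    ultimately have "curve_decomposable (Z \<inter> curve a)" "curve_decomposable (Z \<inter> curve b)"
      using less.hyps[OF _ \<open>a \<noteq> 0\<close>] less.hyps[OF _ \<open>b \<noteq> 0\<close>] by simp_all
    moreover have "Z = (Z \<inter> curve a) \<union> (Z \<inter> curve b)"
      using less.prems(3) 3(1) curve_mult by blast
    ultimately show ?thesis using curve_decomposable_Un by metis
  qed
qed

lemma zariski_closed_decomposition:
  fixes Z :: "('a::{alg_closed_field,field_char_0} \<times> 'a) set"
  assumes "zariski_closed Z" "Z \<noteq> UNIV"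
  shows "curve_decomposable Z"
proof -
  obtain P where P: "Z = zero_set P" using assms(1) by (auto simp: zariski_closed_iff)
  obtain x y where "(x, y) \<notin> Z" using assms(2) by auto
  then obtain g where g: "g \<in> P" "eval2 g x y \<noteq> 0" by (auto simp: P zero_set_def)
  then have "g \<noteq> 0" by auto
  moreover have "Z \<subseteq> curve g" using g(1) by (auto simp: P zero_set_def curve_def)
  ultimately show ?thesis using curve_decomposable_subset_curve assms(1) by blast
qed

definition sqdist :: "'a::comm_ring_1 \<Rightarrow> 'a \<Rightarrow> 'a \<Rightarrow> 'a \<Rightarrow> 'a" where
  "sqdist a b x y = (x - a)^2 + (y - b)^2"

definition sqdist_poly :: "'a::comm_ring_1 \<Rightarrow> 'a \<Rightarrow> 'a poly poly" where
  "sqdist_poly a b = [:[:-a,1:]:]^2 + [:[:-b:],1:]^2"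

lemma eval2_sqdist_poly [simp]: "eval2 (sqdist_poly a b) x y = sqdist a b x y"
  by (simp add: sqdist_poly_def sqdist_def eval2_altdef)

definition conchoid_fiber :: "'a::field poly poly \<Rightarrow> 'a \<Rightarrow> 'a \<Rightarrow> 'a \<Rightarrow> 'a \<times> 'a \<Rightarrow> ('a \<times> 'a) set" where
  "conchoid_fiber f a b d Q = {(x,y). eval2 f x y = 0 \<and> sqdist a b x y \<noteq> 0 \<and>
      (\<exists>s. s^2 * sqdist a b x y = d^2 \<and> Q = (x + s*(x-a), y + s*(y-b)))}"

lemma on_line_at_distance_iff:
  fixes a b x y q1 q2 d :: "'a::field"
  assumes N: "sqdist a b x y \<noteq> 0"
  shows "((q1-x)^2 + (q2-y)^2 = d^2 \<and> (y-b)*(q1-x) - (x-a)*(q2-y) = 0) \<longleftrightarrow>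
         (\<exists>s. s^2 * sqdist a b x y = d^2 \<and> q1 = x + s*(x-a) \<and> q2 = y + s*(y-b))"
proof
  assume h: "(q1-x)^2 + (q2-y)^2 = d^2 \<and> (y-b)*(q1-x) - (x-a)*(q2-y) = 0"
  define u1 where "u1 = q1 - x"
  define u2 where "u2 = q2 - y"
  define v1 where "v1 = x - a"
  define v2 where "v2 = y - b"
  have NN: "sqdist a b x y = v1^2 + v2^2" by (simp add: sqdist_def v1_def v2_def)
  have cr: "v2 * u1 - v1 * u2 = 0" using h by (simp add: u1_def u2_def v1_def v2_def)
  have dd: "u1^2 + u2^2 = d^2" using h by (simp add: u1_def u2_def)
  define s where "s = (u1*v1 + u2*v2) / sqdist a b x y"
  have i1: "u1 * (v1^2 + v2^2) - (u1*v1 + u2*v2) * v1 = v2 * (v2 * u1 - v1 * u2)"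
    by (simp add: power2_eq_square algebra_simps)
  have i2: "u2 * (v1^2 + v2^2) - (u1*v1 + u2*v2) * v2 = - v1 * (v2 * u1 - v1 * u2)"
    by (simp add: power2_eq_square algebra_simps)
  have s1: "s * v1 = u1"
  proof -
    have "u1 * sqdist a b x y = (u1*v1 + u2*v2) * v1" using i1 cr NN by simp
    then show ?thesis using N by (simp add: s_def field_simps)
  qed
  have s2: "s * v2 = u2"
  proof -
    have "u2 * sqdist a b x y = (u1*v1 + u2*v2) * v2" using i2 cr NN by simp
    then show ?thesis using N by (simp add: s_def field_simps)
  qed
  have "s^2 * sqdist a b x y = (s*v1)^2 + (s*v2)^2" by (simp add: NN power_mult_distrib algebra_simps)
  also have "\<dots> = d^2" using s1 s2 dd by simp
  finally show "\<exists>s. s^2 * sqdist a b x y = d^2 \<and> q1 = x + s*(x-a) \<and> q2 = y + s*(y-b)"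
    using s1 s2 by (intro exI[of _ s]) (simp add: u1_def u2_def v1_def v2_def)
next
  assume "\<exists>s. s^2 * sqdist a b x y = d^2 \<and> q1 = x + s*(x-a) \<and> q2 = y + s*(y-b)"
  then obtain s where s: "s^2 * sqdist a b x y = d^2" "q1 = x + s*(x-a)" "q2 = y + s*(y-b)" by blast
  have e1: "q1 - x = s*(x-a)" "q2 - y = s*(y-b)" using s by simp_all
  have "(s*(x-a))^2 + (s*(y-b))^2 = s^2 * sqdist a b x y" by (simp add: sqdist_def power_mult_distrib distrib_left)
  then show "(q1-x)^2 + (q2-y)^2 = d^2 \<and> (y-b)*(q1-x) - (x-a)*(q2-y) = 0"
    unfolding e1 using s(1) by (simp add: mult.commute mult.left_commute)
qed

lemma mem_conchoid_B_iff:
  "((q1,q2),(x,y),w) \<in> conchoid_B f (a,b) d \<longleftrightarrow>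
     eval2 f x y = 0 \<and> (q1-x)^2 + (q2-y)^2 = d^2 \<and> (y-b)*(q1-x) - (x-a)*(q2-y) = 0 \<and> w * sqdist a b x y = 1"
  by (simp add: conchoid_B_def sqdist_def)

lemma pi2_fiber_eq:
  fixes f :: "'a::field poly poly"
  shows "pi2 ` (pi1 -` {Q} \<inter> conchoid_B f (a,b) d) = conchoid_fiber f a b d Q"
proof (intro set_eqI iffI)
  fix p assume "p \<in> pi2 ` (pi1 -` {Q} \<inter> conchoid_B f (a,b) d)"
  then obtain z where z: "z \<in> pi1 -` {Q} \<inter> conchoid_B f (a,b) d" "p = pi2 z" by (rule imageE)
  obtain q1 q2 x y w where zz: "z = ((q1,q2),(x,y),w)" by (metis prod.collapse)
  have e0: "pi1 z = Q" "z \<in> conchoid_B f (a,b) d" using z(1) by simp_all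
  have e: "Q = (q1,q2)" "p = (x,y)" "((q1,q2),(x,y),w) \<in> conchoid_B f (a,b) d"
    using e0 z(2) unfolding zz pi1_def pi2_def by simp_all
  then have h: "eval2 f x y = 0" "(q1-x)^2 + (q2-y)^2 = d^2" "(y-b)*(q1-x) - (x-a)*(q2-y) = 0" "w * sqdist a b x y = 1"
    by (auto simp: mem_conchoid_B_iff)
  have N: "sqdist a b x y \<noteq> 0" using h(4) by auto
  then obtain s where "s^2 * sqdist a b x y = d^2 \<and> q1 = x + s*(x-a) \<and> q2 = y + s*(y-b)"
    using on_line_at_distance_iff[OF N] h(2,3) by blast
  then show "p \<in> conchoid_fiber f a b d Q" using e h(1) N by (auto simp: conchoid_fiber_def)
next
  fix p assume "p \<in> conchoid_fiber f a b d Q"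
  then obtain x y s where e: "p = (x,y)" "eval2 f x y = 0" "sqdist a b x y \<noteq> 0" "s^2 * sqdist a b x y = d^2"
      "Q = (x + s*(x-a), y + s*(y-b))"
    by (auto simp: conchoid_fiber_def)
  define q1 where "q1 = x + s*(x-a)"
  define q2 where "q2 = y + s*(y-b)"
  have "(q1-x)^2 + (q2-y)^2 = d^2 \<and> (y-b)*(q1-x) - (x-a)*(q2-y) = 0"
    using on_line_at_distance_iff[OF e(3), of q1 q2 d] e(4) q1_def q2_def by blast
  then have "((q1,q2),(x,y), inverse (sqdist a b x y)) \<in> conchoid_B f (a,b) d"
    using e(2,3) by (simp add: mem_conchoid_B_iff)
  moreover have "Q = (q1, q2)" using e(5) q1_def q2_def by simp
  ultimately have "((q1,q2),(x,y), inverse (sqdist a b x y)) \<in> pi1 -` {Q} \<inter> conchoid_B f (a,b) d"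
    by (simp add: pi1_def)
  moreover have "p = pi2 ((q1,q2),(x,y), inverse (sqdist a b x y))" using e(1) by (simp add: pi2_def)
  ultimately show "p \<in> pi2 ` (pi1 -` {Q} \<inter> conchoid_B f (a,b) d)" by (rule rev_image_eqI)
qed

lemma mem_pi1_conchoid_B_iff_fiber:
  fixes f :: "'a::field poly poly"
  shows "Q \<in> pi1 ` conchoid_B f (a,b) d \<longleftrightarrow> conchoid_fiber f a b d Q \<noteq> {}"
proof -
  have "Q \<in> pi1 ` conchoid_B f (a,b) d \<longleftrightarrow> pi1 -` {Q} \<inter> conchoid_B f (a,b) d \<noteq> {}" by blast
  then show ?thesis by (simp flip: pi2_fiber_eq)
qed

lemma mem_pi1_conchoid_B_iff:
  fixes f :: "'a::field poly poly"
  shows "Q \<in> pi1 ` conchoid_B f (a,b) d \<longleftrightarrow>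
    (\<exists>x y s. eval2 f x y = 0 \<and> sqdist a b x y \<noteq> 0 \<and> s^2 * sqdist a b x y = d^2 \<and> Q = (x + s*(x-a), y + s*(y-b)))"
  by (auto simp: mem_pi1_conchoid_B_iff_fiber conchoid_fiber_def)

lemma conchoid_fiber_center_subset:
  "conchoid_fiber f a b d (a, b) \<subseteq> {(x,y). eval2 f x y = 0 \<and> sqdist a b x y = d^2}"
proof clarify
  fix x y assume "(x, y) \<in> conchoid_fiber f a b d (a, b)"
  then obtain s where h: "eval2 f x y = 0" "sqdist a b x y \<noteq> 0" "s^2 * sqdist a b x y = d^2"
      "(1+s) * (x-a) = 0" "(1+s) * (y-b) = 0"
    by (auto simp: conchoid_fiber_def algebra_simps)
  have "1 + s = 0"
  proof (rule ccontr)
    assume "1 + s \<noteq> 0"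
    then have "x = a" "y = b" using h(4,5) by auto
    then show False using h(2) by (simp add: sqdist_def)
  qed
  then have "s = -1" by (simp add: add_eq_0_iff)
  then show "eval2 f x y = 0 \<and> sqdist a b x y = d^2" using h by simp
qed

text \<open>Off the centre, a point of the fiber over Q is A + (Q - A) / (1 + s) with
  s^2 N(Q) = d^2 (1 + s)^2, a nonzero quadratic condition on s.\<close>

lemma finite_conchoid_fiber_off_center:
  fixes f :: "'a::field_char_0 poly poly"
  assumes d: "d \<noteq> 0" and QA: "(q1, q2) \<noteq> (a, b)"
  shows "finite (conchoid_fiber f a b d (q1, q2))"
proof -
  define qq where "qq = [:-(d^2), -2*d^2, sqdist a b q1 q2 - d^2:]"
  have "qq \<noteq> 0" using d by (simp add: qq_def)
  define g where "g s = (a + (q1-a)/(1+s), b + (q2-b)/(1+s))" for s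
  have "conchoid_fiber f a b d (q1, q2) \<subseteq> g ` {s. poly qq s = 0}"
  proof clarify
    fix x y assume "(x, y) \<in> conchoid_fiber f a b d (q1, q2)"
    then obtain s where h: "s^2 * sqdist a b x y = d^2"
        "q1 - a = (1+s) * (x-a)" "q2 - b = (1+s) * (y-b)"
      by (auto simp: conchoid_fiber_def algebra_simps)
    have s1: "1 + s \<noteq> 0" using h(2,3) QA by auto
    have "(x, y) = g s" using h(2,3) s1 by (simp add: g_def field_simps)
    moreover have "sqdist a b q1 q2 = (1+s)^2 * sqdist a b x y"
      by (simp add: sqdist_def h(2,3) power_mult_distrib distrib_left)
    then have "poly qq s = (1+s)^2 * (s^2 * sqdist a b x y - d^2)"
      by (simp add: qq_def power2_eq_square algebra_simps)
    then have "poly qq s = 0" using h(1) by simp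
    ultimately show "(x, y) \<in> g ` {s. poly qq s = 0}" by blast
  qed
  then show ?thesis using poly_roots_finite[OF \<open>qq \<noteq> 0\<close>] finite_subset by blast
qed

lemma finite_conchoid_fiber:
  fixes f :: "'a::field_char_0 poly poly"
  assumes d: "d \<noteq> 0" and circfin: "finite {(x,y). eval2 f x y = 0 \<and> sqdist a b x y = d^2}"
  shows "finite (conchoid_fiber f a b d Q)"
proof (cases "Q = (a, b)")
  case True
  then show ?thesis using finite_subset[OF conchoid_fiber_center_subset circfin] by simp
next
  case False
  then show ?thesis using finite_conchoid_fiber_off_center[OF d] by (cases Q) simp
qed

lemma infinite_C0:
  fixes f :: "'a::{alg_closed_field,field_char_0} poly poly"
  assumes irr: "irreducible f" and p0: "eval2 f x0 y0 = 0" "sqdist a b x0 y0 \<noteq> 0"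
  shows "infinite {(x,y). eval2 f x y = 0 \<and> sqdist a b x y \<noteq> 0}"
proof
  assume fin: "finite {(x,y). eval2 f x y = 0 \<and> sqdist a b x y \<noteq> 0}"
  have "finite {(x,y). eval2 f x y = 0 \<and> eval2 (sqdist_poly a b) x y = 0}"
    by (rule finite_common_zeros[OF irr p0(1)]) (use p0 in simp)
  then have "finite ({(x,y). eval2 f x y = 0 \<and> sqdist a b x y \<noteq> 0} \<union> {(x,y). eval2 f x y = 0 \<and> eval2 (sqdist_poly a b) x y = 0})"
    using fin by simp
  moreover have "curve f \<subseteq> {(x,y). eval2 f x y = 0 \<and> sqdist a b x y \<noteq> 0} \<union> {(x,y). eval2 f x y = 0 \<and> eval2 (sqdist_poly a b) x y = 0}"
    by (auto simp: curve_def)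
  ultimately show False using irreducible_curve_infinite[OF irr] finite_subset by blast
qed

lemma finite_curve_Int_circle:
  fixes f :: "'a::{alg_closed_field,field_char_0} poly poly"
  assumes irr: "irreducible f" and p0: "eval2 f x0 y0 = 0" "sqdist a b x0 y0 \<noteq> d^2"
  shows "finite {(x,y). eval2 f x y = 0 \<and> sqdist a b x y = d^2}"
proof -
  have ev: "eval2 (sqdist_poly a b - [:[:d^2:]:]) x y = sqdist a b x y - d^2" for x y
    by (simp only: eval2_diff eval2_sqdist_poly eval2_const)
  have "eval2 (sqdist_poly a b - [:[:d^2:]:]) x0 y0 \<noteq> 0" using p0(2) by (simp add: ev)
  then have "finite {(x,y). eval2 f x y = 0 \<and> eval2 (sqdist_poly a b - [:[:d^2:]:]) x y = 0}"
    by (rule finite_common_zeros[OF irr p0(1)])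
  moreover have "{(x,y). eval2 f x y = 0 \<and> sqdist a b x y = d^2} \<subseteq> {(x,y). eval2 f x y = 0 \<and> eval2 (sqdist_poly a b - [:[:d^2:]:]) x y = 0}"
    by (auto simp add: ev)
  ultimately show ?thesis by (rule finite_subset[rotated])
qed

definition double_fiber_set :: "'a::field poly poly \<Rightarrow> 'a \<Rightarrow> 'a \<Rightarrow> 'a \<Rightarrow> ('a \<times> 'a \<times> 'a) set" where
  "double_fiber_set f a b d = {(x,y,s). eval2 f x y = 0 \<and> sqdist a b x y \<noteq> 0 \<and> s^2 * sqdist a b x y = d^2 \<and>
      eval2 f (x + 2*s*(x-a)) (y + 2*s*(y-b)) = 0}"

text \<open>Two points of C0 sent to the same point Q \<noteq> A lie on the same line through A, so
  the second is the first dilated from A; equal distance d then leaves only the identity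
  and the reflection of the first point across Q.\<close>

lemma same_conchoid_point_cases:
  fixes a b :: "'a::field_char_0"
  assumes N: "sqdist a b x y \<noteq> 0" and s: "s^2 * sqdist a b x y = d^2"
    and s': "s'^2 * sqdist a b x' y' = d^2"
    and Q: "(x + s*(x-a), y + s*(y-b)) = (x' + s'*(x'-a), y' + s'*(y'-b))"
    and QA: "(x + s*(x-a), y + s*(y-b)) \<noteq> (a, b)"
  shows "(x', y') = (x, y) \<or> (x', y') = (x + 2*s*(x-a), y + 2*s*(y-b))"
proof -
  define u1 u2 w1 w2 where "u1 = x - a" "u2 = y - b" "w1 = x' - a" "w2 = y' - b"
  have hq1: "(1+s)*u1 = (1+s')*w1" and hq2: "(1+s)*u2 = (1+s')*w2"
    using Q by (simp_all add: u1_u2_w1_w2_def algebra_simps)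
  have s0': "1 + s' \<noteq> 0"
  proof
    assume "1 + s' = 0"
    then have "(x + s*(x-a), y + s*(y-b)) = (a, b)" using Q by (simp add: algebra_simps add_eq_0_iff)
    then show False using QA by simp
  qed
  define l where "l = (1+s)/(1+s')"
  have w1: "w1 = l * u1" using hq1 s0' by (simp add: l_def field_simps)
  have w2: "w2 = l * u2" using hq2 s0' by (simp add: l_def field_simps)
  have "sqdist a b x' y' = l^2 * sqdist a b x y"
    unfolding sqdist_def by (simp add: u1_u2_w1_w2_def[symmetric] w1 w2 power_mult_distrib algebra_simps)
  then have "(s' * l)^2 * sqdist a b x y = s^2 * sqdist a b x y"
    using s s' by (simp add: power_mult_distrib algebra_simps)
  then have "(s' * l - s) * (s' * l + s) = 0" using N by (simp add: power2_eq_square algebra_simps)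
  then have "s' * l = s \<or> s' * l = -s" by (auto simp add: add_eq_0_iff)
  moreover have ll: "l * (1 + s') = 1 + s" using s0' by (simp add: l_def)
  ultimately have "l = 1 \<or> l = 1 + 2*s"
    by (elim disjE) (simp_all add: algebra_simps)
  then show ?thesis
    using w1 w2 by (auto simp: u1_u2_w1_w2_def algebra_simps)
qed

lemma double_fiber_point:
  fixes f :: "'a::field_char_0 poly poly"
  assumes T: "Q \<in> pi1 ` conchoid_B f (a,b) d" and QA: "Q \<noteq> (a,b)"
    and c: "card (conchoid_fiber f a b d Q) \<noteq> 1"
  shows "Q \<in> (\<lambda>(x,y,s). (x + s*(x-a), y + s*(y-b))) ` double_fiber_set f a b d"
proof -
  obtain p1 where p1: "p1 \<in> conchoid_fiber f a b d Q"
    using T by (auto simp: mem_pi1_conchoid_B_iff_fiber)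
  moreover have "conchoid_fiber f a b d Q \<noteq> {p1}" using c by auto
  ultimately obtain p2 where p: "p1 \<in> conchoid_fiber f a b d Q" "p2 \<in> conchoid_fiber f a b d Q" "p1 \<noteq> p2"
    by blast
  obtain x y s where h: "p1 = (x,y)" "eval2 f x y = 0" "sqdist a b x y \<noteq> 0" "s^2 * sqdist a b x y = d^2"
      "Q = (x + s*(x-a), y + s*(y-b))" using p(1) by (auto simp: conchoid_fiber_def)
  obtain x' y' s' where h': "p2 = (x',y')" "eval2 f x' y' = 0" "s'^2 * sqdist a b x' y' = d^2"
      "Q = (x' + s'*(x'-a), y' + s'*(y'-b))" using p(2) by (auto simp: conchoid_fiber_def)
  have "(x', y') = (x + 2*s*(x-a), y + 2*s*(y-b))"
    using same_conchoid_point_cases[OF h(3,4) h'(3)] h(5) h'(4) QA h(1) h'(1) p(3) by auto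
  then have "(x, y, s) \<in> double_fiber_set f a b d" using h h'(2) by (simp add: double_fiber_set_def)
  then show ?thesis using h(5) by force
qed

lemma finite_double_fiber_set:
  fixes f :: "'a::field_char_0 poly poly"
  assumes d: "d \<noteq> 0" and Y: "finite {(x,y). \<exists>s. (x,y,s) \<in> double_fiber_set f a b d}"
  shows "finite (double_fiber_set f a b d)"
proof -
  let ?Y = "{(x,y). \<exists>s. (x,y,s) \<in> double_fiber_set f a b d}"
  let ?S = "\<lambda>p. {s. poly [:-(d^2), 0, sqdist a b (fst p) (snd p):] s = 0}"
  have "double_fiber_set f a b d \<subseteq> (\<lambda>(p,s). (fst p, snd p, s)) ` Sigma ?Y ?S"
  proof clarify
    fix x y s assume h: "(x, y, s) \<in> double_fiber_set f a b d"
    then have "poly [:-(d^2), 0, sqdist a b x y:] s = 0" by (simp add: double_fiber_set_def power2_eq_square algebra_simps)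
    then have "((x,y),s) \<in> Sigma ?Y ?S" using h by auto
    then show "(x, y, s) \<in> (\<lambda>(p,s). (fst p, snd p, s)) ` Sigma ?Y ?S" by force
  qed
  moreover have "finite (Sigma ?Y ?S)"
  proof (rule finite_SigmaI[OF Y])
    fix p assume "p \<in> ?Y"
    then obtain x y s where "p = (x,y)" "(x,y,s) \<in> double_fiber_set f a b d" by auto
    then have "sqdist a b (fst p) (snd p) \<noteq> 0" by (simp add: double_fiber_set_def)
    then have "[:-(d^2), 0, sqdist a b (fst p) (snd p):] \<noteq> 0" by simp
    then show "finite (?S p)" by (rule poly_roots_finite)
  qed
  ultimately show ?thesis using finite_subset by blast
qed

definition reflection_poly :: "'a::comm_ring_1 poly poly \<Rightarrow> 'a \<Rightarrow> 'a \<Rightarrow> 'a poly poly poly" where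
  "reflection_poly f a b = dilate_poly 2 f a b * dilate_poly (-2) f a b"

definition reflected_eval :: "'a::comm_ring_1 poly poly \<Rightarrow> 'a \<Rightarrow> 'a \<Rightarrow> 'a \<Rightarrow> 'a \<Rightarrow> 'a \<Rightarrow> 'a" where
  "reflected_eval f a b x y s = eval2 f (x + 2 * s * (x - a)) (y + 2 * s * (y - b))"

lemma eval3_reflection_poly: "eval3 (reflection_poly f a b) x y s = reflected_eval f a b x y s * reflected_eval f a b x y (-s)"
  by (simp add: reflection_poly_def eval3_dilate_poly reflected_eval_def)

lemma reflected_eval_even_part:
  fixes f :: "'a::field_char_0 poly poly"
  assumes "s^2 * sqdist a b x y = e"
  shows "reflected_eval f a b x y s * reflected_eval f a b x y (-s) * sqdist a b x y ^ degree (reflection_poly f a b) = even_part (reflection_poly f a b) (sqdist_poly a b) e x y"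
proof -
  have "(eval3 (reflection_poly f a b) x y s + eval3 (reflection_poly f a b) x y (-s)) * eval2 (sqdist_poly a b) x y ^ degree (reflection_poly f a b) =
        2 * even_part (reflection_poly f a b) (sqdist_poly a b) e x y"
    by (rule even_part_eq) (use assms in simp)
  then have "2 * (reflected_eval f a b x y s * reflected_eval f a b x y (-s) * sqdist a b x y ^ degree (reflection_poly f a b)) = 2 * even_part (reflection_poly f a b) (sqdist_poly a b) e x y"
    by (simp add: eval3_reflection_poly algebra_simps)
  then show ?thesis by simp
qed

definition bad_sq_distances :: "'a::field_char_0 poly poly \<Rightarrow> 'a \<Rightarrow> 'a \<Rightarrow> 'a set" where
  "bad_sq_distances f a b = {e. \<forall>x y. eval2 f x y = 0 \<and> sqdist a b x y \<noteq> 0 \<longrightarrow> even_part (reflection_poly f a b) (sqdist_poly a b) e x y = 0}"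

lemma poly_mult_reflect_eq_0_imp:
  fixes r :: "'a::field_char_0 poly"
  assumes "\<And>s. poly r s * poly r (-s) = 0"
  shows "r = 0"
proof (rule ccontr)
  assume "r \<noteq> 0"
  then have f1: "finite {s. poly r s = 0}" by (rule poly_roots_finite)
  then have "finite (uminus ` {s. poly r s = 0})" by simp
  moreover have "{s. poly r (-s) = 0} \<subseteq> uminus ` {s. poly r s = 0}"
    by (auto intro: image_eqI[where x = "- _"])
  ultimately have f2: "finite {s. poly r (-s) = 0}" using finite_subset by blast
  have "UNIV = {s. poly r s = 0} \<union> {s. poly r (-s) = 0}" using assms by auto
  then have "finite (UNIV :: 'a set)" using f1 f2 by (metis finite_UnI)
  then show False using infinite_UNIV_char_0 by blast
qed

lemma on_line_param:
  fixes v1 v2 :: "'a::field"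
  assumes v: "(v1, v2) \<noteq> (0, 0)" and e: "v2 * (x - a) = v1 * (y - b)"
  shows "\<exists>u. x = a + u * v1 \<and> y = b + u * v2"
proof (cases "v1 = 0")
  case False
  then have "x = a + (x - a) / v1 * v1" "y = b + (x - a) / v1 * v2"
    using e by (simp_all add: field_simps)
  then show ?thesis by blast
next
  case True
  with v have "v2 \<noteq> 0" by simp
  then have "x = a + (y - b) / v2 * v1" "y = b + (y - b) / v2 * v2"
    using True e by simp_all
  then show ?thesis by blast
qed

lemma line_through_if_line_in_curve:
  fixes f :: "'a::{alg_closed_field,field_char_0} poly poly"
  assumes irr: "irreducible f" and v: "(v1, v2) \<noteq> (0, 0)"
    and line: "\<And>u. eval2 f (a + u * v1) (b + u * v2) = 0"
  shows "line_through (a, b) (curve f)"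
proof -
  define L where "L = {(x, y). v2 * (x - a) + (-v1) * (y - b) = 0}"
  define lf where "lf = [:[:-(v2*a) + v1*b, v2:], [:-v1:]:]"
  have ell: "eval2 lf x y = v2 * (x - a) - v1 * (y - b)" for x y
    by (simp add: lf_def eval2_altdef algebra_simps)
  have "inj (\<lambda>u. (a + u * v1, b + u * v2))" using v by (auto simp: inj_def)
  then have "infinite (range (\<lambda>u. (a + u * v1, b + u * v2)))"
    using infinite_UNIV_char_0 finite_imageD by blast
  moreover have "range (\<lambda>u. (a + u * v1, b + u * v2)) \<subseteq> {(x,y). eval2 f x y = 0 \<and> eval2 lf x y = 0}"
    using line by (auto simp: ell algebra_simps)
  ultimately have common: "infinite {(x,y). eval2 f x y = 0 \<and> eval2 lf x y = 0}"
    using finite_subset by blast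
  have "curve f \<subseteq> L"
  proof clarify
    fix x y assume "(x, y) \<in> curve f"
    then have "eval2 lf x y = 0"
      using vanishes_on_curve_if_infinite_common_zeros[OF irr common] by (simp add: curve_def)
    then show "(x, y) \<in> L" by (simp add: L_def ell)
  qed
  moreover have "L \<subseteq> curve f"
  proof clarify
    fix x y assume "(x, y) \<in> L"
    then have "v2 * (x - a) = v1 * (y - b)" by (simp add: L_def)
    then obtain u where "x = a + u * v1" "y = b + u * v2" using on_line_param[OF v] by blast
    then show "(x, y) \<in> curve f" using line by (simp add: curve_def)
  qed
  ultimately show ?thesis
    unfolding line_through_def L_def using v by (intro exI[of _ v2] exI[of _ "-v1"]) auto
qed

lemma line_in_curve_if_even_part_vanishes:
  fixes f :: "'a::field_char_0 poly poly"
  assumes H0: "\<And>e. even_part (reflection_poly f a b) (sqdist_poly a b) e x0 y0 = 0"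
    and p0: "sqdist a b x0 y0 \<noteq> 0"
  shows "eval2 f (a + u * (x0 - a)) (b + u * (y0 - b)) = 0"
proof -
  define r where "r = map_poly (\<lambda>q. eval2 q x0 y0) (dilate_poly 2 f a b)"
  have r: "poly r s = reflected_eval f a b x0 y0 s" for s
    using eval3_dilate_poly[of 2 f a b x0 y0 s] by (simp add: r_def eval3_def reflected_eval_def)
  have "poly r s * poly r (-s) = 0" for s
    using reflected_eval_even_part[of s a b x0 y0 "s^2 * sqdist a b x0 y0" f] H0 p0 by (simp add: r)
  then have "r = 0" by (rule poly_mult_reflect_eq_0_imp)
  then have "reflected_eval f a b x0 y0 ((u - 1) / 2) = 0" using r by simp
  moreover have "reflected_eval f a b x0 y0 ((u - 1) / 2) = eval2 f (a + u * (x0 - a)) (b + u * (y0 - b))"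
    unfolding reflected_eval_def by (rule arg_cong2[where f = "eval2 f"]) (simp_all add: field_simps)
  ultimately show ?thesis by simp
qed

text \<open>If infinitely many squared distances were bad, the even part would vanish
  identically at a fixed point of C0, so the whole line through that point and A would
  lie on the curve.\<close>

lemma finite_bad_sq_distances:
  fixes f :: "'a::{alg_closed_field,field_char_0} poly poly"
  assumes irr: "irreducible f" and p0: "eval2 f x0 y0 = 0" "sqdist a b x0 y0 \<noteq> 0"
    and nl: "\<not> line_through (a, b) (curve f)"
  shows "finite (bad_sq_distances f a b)"
proof (rule ccontr)
  assume inf: "infinite (bad_sq_distances f a b)"
  obtain p where p: "\<And>e. even_part (reflection_poly f a b) (sqdist_poly a b) e x0 y0 = poly p e"
    using even_part_poly_e by blast
  have "bad_sq_distances f a b \<subseteq> {e. poly p e = 0}"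
    using p0 by (auto simp: bad_sq_distances_def p[symmetric])
  then have "p = 0" using inf poly_roots_finite finite_subset by blast
  then have "eval2 f (a + u * (x0 - a)) (b + u * (y0 - b)) = 0" for u
    using line_in_curve_if_even_part_vanishes[OF _ p0(2)] p by simp
  moreover have "(x0 - a, y0 - b) \<noteq> (0, 0)" using p0(2) by (auto simp: sqdist_def)
  ultimately show False using line_through_if_line_in_curve[OF irr] nl by blast
qed

lemma finite_double_fiber_points:
  fixes f :: "'a::{alg_closed_field,field_char_0} poly poly"
  assumes irr: "irreducible f" and nb: "d^2 \<notin> bad_sq_distances f a b"
  shows "finite {(x,y). \<exists>s. (x,y,s) \<in> double_fiber_set f a b d}"
proof -
  obtain x1 y1 where p1: "eval2 f x1 y1 = 0" "sqdist a b x1 y1 \<noteq> 0" "even_part (reflection_poly f a b) (sqdist_poly a b) (d^2) x1 y1 \<noteq> 0"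
    using nb by (auto simp: bad_sq_distances_def)
  obtain H where H: "\<And>x y. even_part (reflection_poly f a b) (sqdist_poly a b) (d^2) x y = eval2 H x y" using even_part_poly_xy by blast
  have fin: "finite {(x,y). eval2 f x y = 0 \<and> eval2 H x y = 0}"
    by (rule finite_common_zeros[OF irr p1(1)]) (use p1(3) H in simp)
  have "{(x,y). \<exists>s. (x,y,s) \<in> double_fiber_set f a b d} \<subseteq> {(x,y). eval2 f x y = 0 \<and> eval2 H x y = 0}"
  proof clarify
    fix x y s assume h: "(x, y, s) \<in> double_fiber_set f a b d"
    then have "reflected_eval f a b x y s = 0" "eval2 f x y = 0" "s^2 * sqdist a b x y = d^2" by (simp_all add: double_fiber_set_def reflected_eval_def)
    then have "even_part (reflection_poly f a b) (sqdist_poly a b) (d^2) x y = 0" using reflected_eval_even_part[of s a b x y "d^2" f] by simp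
    then show "eval2 f x y = 0 \<and> eval2 H x y = 0" using \<open>eval2 f x y = 0\<close> H by simp
  qed
  then show ?thesis using fin finite_subset by blast
qed

text \<open>If h vanishes at both square roots s of d^2 / N(x,y) over infinitely many points (x,y)
  of the curve, then the even parts of h and h^2 vanish on the whole curve, and together
  they force h to vanish at both roots everywhere.\<close>

lemma eval3_vanishes_if_vanishes_over_infinite_set:
  fixes f :: "'a::{alg_closed_field,field_char_0} poly poly" and h :: "'a poly poly poly"
  assumes irr: "irreducible f"
    and S: "infinite S" "S \<subseteq> {(x,y). eval2 f x y = 0 \<and> sqdist a b x y \<noteq> 0}"
    and van: "\<And>x y s. (x, y) \<in> S \<Longrightarrow> s^2 * sqdist a b x y = d^2 \<Longrightarrow> eval3 h x y s = 0"
    and p: "eval2 f x y = 0" "sqdist a b x y \<noteq> 0" "s^2 * sqdist a b x y = d^2"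
  shows "eval3 h x y s = 0"
proof -
  obtain HA where HA: "\<And>x y. even_part h (sqdist_poly a b) (d^2) x y = eval2 HA x y"
    using even_part_poly_xy by blast
  obtain HB where HB: "\<And>x y. even_part (h * h) (sqdist_poly a b) (d^2) x y = eval2 HB x y"
    using even_part_poly_xy by blast
  have evA: "(eval3 h x y s + eval3 h x y (-s)) * sqdist a b x y ^ degree h = 2 * eval2 HA x y"
    if "s^2 * sqdist a b x y = d^2" for x y s
    using even_part_eq[of s "sqdist_poly a b" x y "d^2" h] that by (simp add: HA)
  have evB: "(eval3 h x y s ^ 2 + eval3 h x y (-s) ^ 2) * sqdist a b x y ^ degree (h * h) = 2 * eval2 HB x y"
    if "s^2 * sqdist a b x y = d^2" for x y s
  proof -
    have "(eval3 (h * h) x y s + eval3 (h * h) x y (-s)) * eval2 (sqdist_poly a b) x y ^ degree (h * h)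
        = 2 * even_part (h * h) (sqdist_poly a b) (d^2) x y"
      by (rule even_part_eq) (use that in simp)
    then show ?thesis unfolding HB by (simp add: power2_eq_square)
  qed
  have zero: "eval2 HA x y = 0 \<and> eval2 HB x y = 0" if xy: "(x, y) \<in> S" for x y
  proof -
    have N: "sqdist a b x y \<noteq> 0" using xy S(2) by auto
    obtain s where "s^2 = d^2 / sqdist a b x y" using nth_root_exists[of 2] by auto
    then have s: "s^2 * sqdist a b x y = d^2" using N by simp
    then have "eval3 h x y s = 0" "eval3 h x y (-s) = 0" using van xy by simp_all
    then show ?thesis using evA[OF s] evB[OF s] by simp
  qed
  have "S \<subseteq> {(x,y). eval2 f x y = 0 \<and> eval2 HA x y = 0}" using zero S(2) by auto
  then have "infinite {(x,y). eval2 f x y = 0 \<and> eval2 HA x y = 0}" using finite_subset S(1) by blast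
  then have "eval2 HA x y = 0" by (rule vanishes_on_curve_if_infinite_common_zeros[OF irr _ p(1)])
  then have sA: "eval3 h x y (-s) = - eval3 h x y s"
    using evA[OF p(3)] p(2) by (simp add: eq_neg_iff_add_eq_0 add.commute)
  have "S \<subseteq> {(x,y). eval2 f x y = 0 \<and> eval2 HB x y = 0}" using zero S(2) by auto
  then have "infinite {(x,y). eval2 f x y = 0 \<and> eval2 HB x y = 0}" using finite_subset S(1) by blast
  then have "eval2 HB x y = 0" by (rule vanishes_on_curve_if_infinite_common_zeros[OF irr _ p(1)])
  then have "eval3 h x y s ^ 2 + eval3 h x y (-s) ^ 2 = 0" using evB[OF p(3)] p(2) by simp
  then have "2 * eval3 h x y s ^ 2 = 0" using sA by simp
  then show ?thesis by simp
qed

lemma vanishes_on_pi1_if_vanishes_off_finite: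
  fixes f g :: "'a::{alg_closed_field,field_char_0} poly poly"
  assumes irr: "irreducible f" and p0: "eval2 f x0 y0 = 0" "sqdist a b x0 y0 \<noteq> 0"
    and d: "d \<noteq> 0" and circfin: "finite {(x,y). eval2 f x y = 0 \<and> sqdist a b x y = d^2}"
    and E: "finite E"
    and van: "\<And>q1 q2. (q1, q2) \<in> pi1 ` conchoid_B f (a,b) d - E \<Longrightarrow> eval2 g q1 q2 = 0"
    and Q: "(q1, q2) \<in> pi1 ` conchoid_B f (a,b) d"
  shows "eval2 g q1 q2 = 0"
proof -
  define h where "h = dilate_poly 1 g a b"
  have h: "eval3 h x y s = eval2 g (x + s * (x - a)) (y + s * (y - b))" for x y s
    by (simp add: h_def eval3_dilate_poly)
  define PE where "PE = (\<Union>Q\<in>E. conchoid_fiber f a b d Q)"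
  define S where "S = {(x,y). eval2 f x y = 0 \<and> sqdist a b x y \<noteq> 0} - PE"
  have "finite PE" unfolding PE_def using E finite_conchoid_fiber[OF d circfin] by blast
  then have infS: "infinite S" using infinite_C0[OF irr p0] by (simp add: S_def)
  have subS: "S \<subseteq> {(x,y). eval2 f x y = 0 \<and> sqdist a b x y \<noteq> 0}" by (auto simp: S_def)
  have vanS: "eval3 h x y s = 0" if xy: "(x, y) \<in> S" and s: "s^2 * sqdist a b x y = d^2" for x y s
  proof -
    have fib: "(x, y) \<in> conchoid_fiber f a b d (x + s * (x - a), y + s * (y - b))"
      using xy s by (auto simp: S_def conchoid_fiber_def)
    then have "(x + s * (x - a), y + s * (y - b)) \<in> pi1 ` conchoid_B f (a,b) d"
      using mem_pi1_conchoid_B_iff_fiber by blast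
    moreover have "(x + s * (x - a), y + s * (y - b)) \<notin> E"
      using fib xy by (auto simp: S_def PE_def)
    ultimately show ?thesis using van by (simp add: h)
  qed
  obtain x y s where q: "eval2 f x y = 0" "sqdist a b x y \<noteq> 0" "s^2 * sqdist a b x y = d^2"
    "(q1, q2) = (x + s*(x-a), y + s*(y-b))" using Q unfolding mem_pi1_conchoid_B_iff by blast
  have "eval3 h x y s = 0"
    by (rule eval3_vanishes_if_vanishes_over_infinite_set[OF irr infS subS vanS q(1-3)])
  then show ?thesis using q(4) by (simp add: h)
qed

lemma zariski_closure_pi1_minus_finite:
  fixes f :: "'a::{alg_closed_field,field_char_0} poly poly"
  assumes irr: "irreducible f" and p0: "eval2 f x0 y0 = 0" "sqdist a b x0 y0 \<noteq> 0"
    and d: "d \<noteq> 0" and circfin: "finite {(x,y). eval2 f x y = 0 \<and> sqdist a b x y = d^2}"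
    and E: "finite E"
  shows "zariski_closure (pi1 ` conchoid_B f (a,b) d - E) = zariski_closure (pi1 ` conchoid_B f (a,b) d)"
proof
  let ?T = "pi1 ` conchoid_B f (a,b) d"
  show "zariski_closure (?T - E) \<subseteq> zariski_closure ?T" by (rule zariski_closure_mono) blast
  obtain P where P: "zariski_closure (?T - E) = zero_set P" using zariski_closed_closure[of "?T - E"] by (auto simp: zariski_closed_iff)
  have "?T \<subseteq> zero_set P"
  proof
    fix Q assume Q: "Q \<in> ?T"
    obtain q1 q2 where Qe: "Q = (q1, q2)" by (metis prod.collapse)
    have "eval2 g q1 q2 = 0" if g: "g \<in> P" for g
    proof (rule vanishes_on_pi1_if_vanishes_off_finite[OF irr p0 d circfin E _ Q[unfolded Qe]])
      fix r1 r2 assume "(r1, r2) \<in> ?T - E"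
      moreover have "?T - E \<subseteq> zero_set P" using zariski_closure_subset[of "?T - E"] P by simp
      ultimately have "(r1, r2) \<in> zero_set P" by (rule subsetD[rotated])
      then show "eval2 g r1 r2 = 0" using g by (simp add: mem_zero_set)
    qed
    then show "Q \<in> zero_set P" by (simp add: Qe mem_zero_set)
  qed
  then show "zariski_closure ?T \<subseteq> zariski_closure (?T - E)" by (simp add: P zariski_closure_minimal zariski_closed_zero_set)
qed

lemma irreducible_component_subset_curve_eq:
  fixes G :: "'a::{alg_closed_field,field_char_0} poly poly"
  assumes "irreducible_component M V" "irreducible G" "curve G \<subseteq> V" "M \<subseteq> curve G"
  shows "curve G = M"
  using assms zariski_irreducible_curve unfolding irreducible_component_def by blast

lemma irreducible_component_cases:
  fixes V :: "('a::{alg_closed_field,field_char_0} \<times> 'a) set"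
  assumes comp: "irreducible_component M V"
    and V: "V = (\<Union>G\<in>\<G>. curve G) \<union> E" "finite \<G>" "finite E"
    and \<G>: "\<forall>G\<in>\<G>. irreducible G \<and> curve G \<subseteq> V"
  obtains G where "G \<in> \<G>" "M = curve G"
    | Q where "M = {Q}" "\<forall>G\<in>\<G>. Q \<notin> curve G"
proof -
  have Mirr: "zariski_irreducible M" and "M \<subseteq> V"
    using comp by (simp_all add: irreducible_component_def)
  then have sub: "M \<subseteq> \<Union>(insert E (curve ` \<G>))" using V(1) by auto
  have cl: "\<forall>A\<in>insert E (curve ` \<G>). zariski_closed A"
    using zariski_closed_finite[OF V(3)] zariski_closed_curve by auto
  have fin: "finite (insert E (curve ` \<G>))" using V(2) by simp
  obtain A where A: "A \<in> insert E (curve ` \<G>)" "M \<subseteq> A"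
    using zariski_irreducible_subset_Union[OF Mirr fin cl sub] by blast
  show thesis
  proof (cases "A = E")
    case True
    then have "finite M" using A(2) V(3) finite_subset by blast
    then obtain Q where MQ: "M = {Q}" using zariski_irreducible_finite_singleton[OF Mirr] by blast
    have "Q \<notin> curve G" if G: "G \<in> \<G>" for G
    proof
      assume "Q \<in> curve G"
      then have "M \<subseteq> curve G" using MQ by simp
      then have "curve G = {Q}"
        using irreducible_component_subset_curve_eq[OF comp] \<G> G MQ by blast
      moreover have "infinite (curve G)" using irreducible_curve_infinite \<G> G by blast
      ultimately show False by simp
    qed
    then show thesis using MQ that(2) by blast
  next
    case False
    then obtain G where G: "G \<in> \<G>" "M \<subseteq> curve G" using A by auto
    have "curve G = M"
      by (rule irreducible_component_subset_curve_eq[OF comp]) (use \<G> G in auto)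
    then show thesis using that(1) G by simp
  qed
qed

lemma irreducible_component_not_subset_other_curves:
  fixes \<G> :: "'a::{alg_closed_field,field_char_0} poly poly set"
  assumes comp: "irreducible_component M V" and M: "M = curve G"
    and \<G>: "G \<in> \<G>" "finite \<G>" "\<forall>G\<in>\<G>. irreducible G \<and> curve G \<subseteq> V" and E: "finite E"
  shows "\<not> M \<subseteq> (\<Union>G'\<in>{G'\<in>\<G>. curve G' \<noteq> M}. curve G') \<union> E"
proof
  assume "M \<subseteq> (\<Union>G'\<in>{G'\<in>\<G>. curve G' \<noteq> M}. curve G') \<union> E"
  then have sub: "M \<subseteq> \<Union>(insert E (curve ` {G'\<in>\<G>. curve G' \<noteq> M}))" by auto
  have Mirr: "zariski_irreducible M" using comp by (simp add: irreducible_component_def)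
  have cl: "\<forall>A\<in>insert E (curve ` {G'\<in>\<G>. curve G' \<noteq> M}). zariski_closed A"
    using zariski_closed_finite[OF E] zariski_closed_curve by auto
  have fin: "finite (insert E (curve ` {G'\<in>\<G>. curve G' \<noteq> M}))" using \<G>(2) by simp
  obtain A where A: "A \<in> insert E (curve ` {G'\<in>\<G>. curve G' \<noteq> M})" "M \<subseteq> A"
    using zariski_irreducible_subset_Union[OF Mirr fin cl sub] by blast
  show False
  proof (cases "A = E")
    case True
    then have "finite M" using A(2) E finite_subset by blast
    moreover have "infinite M" using M \<G>(1,3) irreducible_curve_infinite by blast
    ultimately show False by simp
  next
    case False
    then obtain G' where "G' \<in> \<G>" "curve G' \<noteq> M" "M \<subseteq> curve G'" using A by auto
    then show False using irreducible_component_subset_curve_eq[OF comp] \<G>(3) by blast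
  qed
qed

lemma zariski_closure_Int_curve_component:
  fixes U :: "('a::{alg_closed_field,field_char_0} \<times> 'a) set"
  assumes comp: "irreducible_component M V" and V: "zariski_closure U = V"
    and M: "M = curve G" "G \<in> \<G>"
    and GE: "finite \<G>" "finite E" "\<forall>G\<in>\<G>. irreducible G \<and> curve G \<subseteq> V"
      "V = (\<Union>G\<in>\<G>. curve G) \<union> E"
  shows "zariski_closure (M \<inter> U) = M"
proof -
  have Mirr: "zariski_irreducible M" and MV: "M \<subseteq> V"
    using comp by (simp_all add: irreducible_component_def)
  have UV: "U \<subseteq> V" using zariski_closure_subset[of U] V by simp
  define W where "W = (\<Union>G'\<in>{G'\<in>\<G>. curve G' \<noteq> M}. curve G') \<union> E"
  have clW: "zariski_closed W"
    unfolding W_def using GE(1,2) by (simp add: zariski_closed_curves_Un)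
  have "U - M \<subseteq> W" using UV GE(4) by (auto simp: W_def)
  then have "zariski_closure (U - M) \<subseteq> W" by (rule zariski_closure_minimal[OF clW])
  moreover have "U = (M \<inter> U) \<union> (U - M)" by blast
  then have "V = zariski_closure (M \<inter> U) \<union> zariski_closure (U - M)"
    using V zariski_closure_Un by metis
  ultimately have "M \<subseteq> zariski_closure (M \<inter> U) \<union> W" using MV by blast
  then have "M \<subseteq> zariski_closure (M \<inter> U) \<or> M \<subseteq> W"
    by (rule zariski_irreducible_subset_Un[OF Mirr _ zariski_closed_closure clW])
  moreover have "\<not> M \<subseteq> W"
    unfolding W_def by (rule irreducible_component_not_subset_other_curves[OF comp M GE(1,3,2)])
  moreover have "zariski_closure (M \<inter> U) \<subseteq> M"
    using Mirr by (intro zariski_closure_minimal) (auto simp: zariski_irreducible_def)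
  ultimately show ?thesis by blast
qed

text \<open>A set whose closure survives the removal of any single point is dense in every
  irreducible component of its closure: point components are then excluded, and a curve
  component is not covered by the other components.\<close>

lemma zariski_closure_Int_irreducible_component:
  fixes U :: "('a::{alg_closed_field,field_char_0} \<times> 'a) set"
  assumes comp: "irreducible_component M V" and V: "zariski_closure U = V"
    and punctured: "\<And>Q. zariski_closure (U - {Q}) = V"
  shows "zariski_closure (M \<inter> U) = M"
proof (cases "V = UNIV")
  case True
  then have "M = UNIV"
    using comp zariski_irreducible_UNIV by (auto simp: irreducible_component_def)
  then show ?thesis using V True by simp
next
  case False
  have MV: "M \<subseteq> V" using comp by (simp add: irreducible_component_def)
  have "zariski_closed V" using zariski_closed_closure[of U] V by simp
  then obtain \<G> E where GE: "finite \<G>" "finite E" "\<forall>G\<in>\<G>. irreducible G \<and> curve G \<subseteq> V"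
      "V = (\<Union>G\<in>\<G>. curve G) \<union> E"
    using zariski_closed_decomposition[OF _ False] unfolding curve_decomposable_def by blast
  have UV: "U \<subseteq> V" using zariski_closure_subset[of U] V by simp
  show ?thesis
    using comp GE(4,1,2,3)
  proof (cases rule: irreducible_component_cases)
    case (2 Q)
    define W where "W = (\<Union>G\<in>\<G>. curve G) \<union> (E - {Q})"
    have "zariski_closed W"
      unfolding W_def using GE(1,2) by (simp add: zariski_closed_curves_Un)
    moreover have "U - {Q} \<subseteq> W" using UV GE(4) by (auto simp: W_def)
    ultimately have "zariski_closure (U - {Q}) \<subseteq> W" by (rule zariski_closure_minimal)
    then have "V \<subseteq> W" using punctured by simp
    then show ?thesis using MV 2 by (auto simp: W_def)
  next
    case (1 G)
    show ?thesis by (rule zariski_closure_Int_curve_component[OF comp V 1(2,1) GE])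
  qed
qed

definition non_simple_points :: "'a::field poly poly \<Rightarrow> 'a \<Rightarrow> 'a \<Rightarrow> 'a \<Rightarrow> ('a \<times> 'a) set" where
  "non_simple_points f a b d = {Q \<in> pi1 ` conchoid_B f (a,b) d. card (conchoid_fiber f a b d Q) \<noteq> 1}"

lemma finite_non_simple_points:
  fixes f :: "'a::{alg_closed_field,field_char_0} poly poly"
  assumes "irreducible f" "d \<noteq> 0" "d^2 \<notin> bad_sq_distances f a b"
  shows "finite (non_simple_points f a b d)"
proof -
  have "finite (double_fiber_set f a b d)"
    by (rule finite_double_fiber_set[OF assms(2) finite_double_fiber_points[OF assms(1,3)]])
  moreover have "non_simple_points f a b d \<subseteq>
      insert (a,b) ((\<lambda>(x,y,s). (x + s*(x-a), y + s*(y-b))) ` double_fiber_set f a b d)"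
    using double_fiber_point unfolding non_simple_points_def by blast
  ultimately show ?thesis using finite_subset by blast
qed

lemma simple_component_if_good_distance:
  fixes f :: "'a::{alg_closed_field,field_char_0} poly poly"
  assumes irr: "irreducible f" and p0: "eval2 f x0 y0 = 0" "sqdist a b x0 y0 \<noteq> 0"
    and d: "d \<noteq> 0" and good: "d^2 \<notin> bad_sq_distances f a b" "sqdist a b x0 y0 \<noteq> d^2"
    and comp: "irreducible_component M (conchoid f (a,b) d)"
  shows "simple_component f (a,b) d M"
proof -
  let ?T = "pi1 ` conchoid_B f (a,b) d"
  define U where "U = ?T - non_simple_points f a b d"
  have closure_minus: "zariski_closure (?T - E) = conchoid f (a,b) d" if "finite E" for E
    using zariski_closure_pi1_minus_finite[OF irr p0 d finite_curve_Int_circle[OF irr p0(1) good(2)] that]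
    by (simp add: conchoid_def)
  have fin: "finite (non_simple_points f a b d)"
    by (rule finite_non_simple_points[OF irr d good(1)])
  have "zariski_closure U = conchoid f (a,b) d" unfolding U_def by (rule closure_minus[OF fin])
  moreover have "zariski_closure (U - {Q}) = conchoid f (a,b) d" for Q
  proof -
    have "U - {Q} = ?T - insert Q (non_simple_points f a b d)" by (auto simp: U_def)
    then show ?thesis using closure_minus fin by simp
  qed
  ultimately have dense: "zariski_closure (M \<inter> U) = M"
    by (rule zariski_closure_Int_irreducible_component[OF comp])
  have Mne: "M \<noteq> {}" using comp by (simp add: irreducible_component_def zariski_irreducible_def)
  show ?thesis unfolding simple_component_def
  proof (intro exI[of _ "M \<inter> U"] conjI ballI)
    show "M \<inter> U \<noteq> {}" using dense Mne zariski_closure_empty_iff by metis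
    show "card (pi2 ` (pi1 -` {Q} \<inter> conchoid_B f (a,b) d)) = 1" if "Q \<in> M \<inter> U" for Q
      using that by (simp add: pi2_fiber_eq U_def non_simple_points_def)
  qed (use dense in auto)
qed

lemma finite_sq_preimage:
  fixes S :: "'a::idom set"
  assumes "finite S"
  shows "finite {d. d^2 \<in> S}"
proof -
  have "{d. d^2 \<in> S} = (\<Union>e\<in>S. {d. poly [:-e, 0, 1:] d = 0})"
    by (auto simp: power2_eq_square algebra_simps)
  also have "finite \<dots>"
    using assms by (intro finite_UN_I poly_roots_finite) simp_all
  finally show ?thesis .
qed

theorem theorem4:
  fixes f :: "'a :: {alg_closed_field, field_char_0} poly poly"
    and A :: "'a \<times> 'a"
  assumes "irreducible f"
    and "C0 f A \<noteq> {}"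
    and "\<forall>r. curve f \<noteq> circle_centered A r"
    and "\<not> line_through A (curve f)"
  shows "finite {d. d \<noteq> 0 \<and>
           \<not> (\<forall>M. irreducible_component M (conchoid f A d) \<longrightarrow> simple_component f A d M)}"
proof -
  obtain a b where A: "A = (a, b)" by (cases A)
  obtain x0 y0 where p0: "eval2 f x0 y0 = 0" "sqdist a b x0 y0 \<noteq> 0"
    using assms(2) by (auto simp: C0_def curve_def sqdist_def A)
  define S where "S = insert (sqdist a b x0 y0) (bad_sq_distances f a b)"
  have "finite S"
    unfolding S_def using finite_bad_sq_distances[OF assms(1) p0 assms(4)[unfolded A]] by simp
  moreover have "d^2 \<in> S"
    if d: "d \<noteq> 0" and comp: "irreducible_component M (conchoid f A d)"
      and nonsimple: "\<not> simple_component f A d M" for d M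
  proof (rule ccontr)
    assume "d^2 \<notin> S"
    then have "d^2 \<notin> bad_sq_distances f a b" "sqdist a b x0 y0 \<noteq> d^2" by (auto simp: S_def)
    from simple_component_if_good_distance[OF assms(1) p0 d this comp[unfolded A]]
    show False using nonsimple by (simp add: A)
  qed
  then have "{d. d \<noteq> 0 \<and> \<not> (\<forall>M. irreducible_component M (conchoid f A d) \<longrightarrow>
      simple_component f A d M)} \<subseteq> {d. d^2 \<in> S}" by blast
  ultimately show ?thesis using finite_sq_preimage finite_subset by blast
qed

end
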